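(* Let $(P_1,e_1),\dots,(P_\ell,e_\ell)$ be friendly tree patterns and let $n\ge 0$. Then Algorithm S, applied to the set $\mathcal{L}_n=\mathcal{T}_n((P_1,e_1),\dots,(P_\ell,e_\ell))$ and initialized with the right path $T_0\in\mathcal{T}_n$ (the tree in which no vertex has a left child), visits every binary tree from $\mathcal{T}_n((P_1,e_1),\dots,(P_\ell,e_\ell))$ exactly once.
   Context: For $n\ge 0$, $\mathcal{T}_n$ is the set of binary trees with $n$ vertices, labeled $1,\dots,n$ by the search tree property (left-subtree vertices of $i$ are smaller than $i$, right-subtree vertices larger). For a vertex $i$: $c_L(i),c_R(i),p(i)$ are its left child, right child, parent ($\varepsilon$ if nonexistent); $r(T)$ is the root; $T(i)$, $L(i)$, $R(i)$ are the subtrees rooted at $i$, $c_L(i)$, $c_R(i)$. $B_R(i)=\{i,c_R(i),c_R^2(i),\dots\}$ is the vertex set of the right branch starting at $i$, and $B_R^-(i)$ is $B_R(i)$ minus its last vertex. A tree pattern is $(P,e)$ with $P\in\mathcal{T}_k$, $e\colon[k]\setminus\{r(P)\}\to\{0,1\}$. $T\in\mathcal{T}_n$ contains $(P,e)$ if there is an injection $f\colon[k]\to[n]$ such that for every non-root $i$ of $P$: if $e(i)=1$, $f(i)$ is the left (resp. right) child of $f(p(i))$ when $i$ is the left (resp. right) child of $p(i)$; if $e(i)=0$, $f(i)\in L(f(p(i)))$ (resp. $R(f(p(i)))$) when $i$ is the left (resp. right) child of $p(i)$. Otherwise $T$ avoids it. $\mathcal{T}_n((P_1,e_1),\dots,(P_\ell,e_\ell))$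 is the set of trees in $\mathcal{T}_n$ avoiding all $(P_j,e_j)$. A tree pattern $(P,e)$, $P\in\mathcal{T}_k$, is friendly if: (i) $p(k)\neq\varepsilon$ and $c_L(k)\neq\varepsilon$ (the largest vertex $k$ is neither the root nor a leaf); (ii) $e(j)=0$ for every $j\in B_R^-(r(P))\setminus\{r(P)\}$; (iii) if $e(k)=1$ then $e(c_L(k))=0$. Rotations: for a vertex $j$ with $p(j)\ne\varepsilon$ and $j=c_R(p(j))$, set $i=p(j)$, $Y=L(j)$; the up-rotation of $j$ makes $j$ the child of $p(i)$ in place of $i$ (if $p(i)\ne\varepsilon$), makes $i$ the left child of $j$ and $Y$ the right subtree of $i$. The down-rotation of $j$ is its inverse and is defined iff $c_L(j)\ne\varepsilon$. An up-slide (down-slide) of $j$ by $d$ steps is a sequence of $d$ up-rotations (down-rotations) of $j$. For a set $\mathcal{L}_n\subseteq\mathcal{T}_n$, a slide producing a tree in $\mathcal{L}_n$ is minimal if every slide of the same vertex in the same direction by fewer steps produces a tree not in $\mathcal{L}_n$. Algorithm S (on $\mathcal{L}_n$, initial tree $T_0\in\mathcal{L}_n$): S1. Visit $T_0$. S2. Generate an unvisited tree from $\mathcal{L}_n$ by performing a minimal slide of the largest possible vertex in the most recently visited tree; if no such slide exists, or the direction of the slide is ambiguous, terminate; otherwise visit this tree and repeat S2. *)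

theory Defs
  imports Main "HOL-Library.Tree"
begin

text \<open>The set
 T_n of binary trees with n vertices labelled 1..n by the search tree property
 is the set of trees whose in-order traversal is [1,...,n].\<close>

definition Tn :: "nat \<Rightarrow> nat tree set" where
  "Tn n = {t. inorder t = [1..<Suc n]}"

fun subtree_at :: "nat tree \<Rightarrow> nat \<Rightarrow> nat tree" where
  "subtree_at Leaf i = Leaf"
| "subtree_at (Node l x r) i =
     (if x = i then Node l x r
      else if i \<in> set_tree l then subtree_at l i else subtree_at r i)"

definition root_of :: "nat tree \<Rightarrow> nat option" where
  "root_of t = (case t of Leaf \<Rightarrow> None | Node _ a _ \<Rightarrow> Some a)"

definition Lsub :: "nat tree \<Rightarrow> nat \<Rightarrow> nat tree" where
  "Lsub t i = (case subtree_at t i of Leaf \<Rightarrow> Leaf | Node l _ _ \<Rightarrow> l)"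

definition Rsub :: "nat tree \<Rightarrow> nat \<Rightarrow> nat tree" where
  "Rsub t i = (case subtree_at t i of Leaf \<Rightarrow> Leaf | Node _ _ r \<Rightarrow> r)"

text \<open>Left / right child (None plays the role of epsilon).\<close>
definition cL :: "nat tree \<Rightarrow> nat \<Rightarrow> nat option" where
  "cL t i = root_of (Lsub t i)"

definition cR :: "nat tree \<Rightarrow> nat \<Rightarrow> nat option" where
  "cR t i = root_of (Rsub t i)"

definition has_parent :: "nat tree \<Rightarrow> nat \<Rightarrow> bool" where
  "has_parent t i \<longleftrightarrow> (\<exists>p. cL t p = Some i \<or> cR t p = Some i)"

fun rbranch :: "nat tree \<Rightarrow> nat list" where
  "rbranch Leaf = []"
| "rbranch (Node l a r) = a # rbranch r"

text \<open>A tree pattern (P,e); e is only relevant on non-root vertices of P;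
  e i = True means e(i)=1, False means e(i)=0.\<close>
type_synonym pattern = "nat tree \<times> (nat \<Rightarrow> bool)"

definition is_pattern :: "pattern \<Rightarrow> bool" where
  "is_pattern pe \<longleftrightarrow> fst pe \<in> Tn (length (inorder (fst pe)))"

definition contains :: "nat tree \<Rightarrow> pattern \<Rightarrow> bool" where
  "contains T pe \<longleftrightarrow> (case pe of (P, e) \<Rightarrow>
     (\<exists>f. inj_on f (set_tree P) \<and> f ` set_tree P \<subseteq> set_tree T \<and>
       (\<forall>p i. cL P p = Some i \<longrightarrow>
          (if e i then cL T (f p) = Some (f i) else f i \<in> set_tree (Lsub T (f p)))) \<and>
       (\<forall>p i. cR P p = Some i \<longrightarrow>
          (if e i then cR T (f p) = Some (f i) else f i \<in> set_tree (Rsub T (f p))))))"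

definition avoiding :: "nat \<Rightarrow> pattern list \<Rightarrow> nat tree set" where
  "avoiding n pats = {T \<in> Tn n. \<forall>pe \<in> set pats. \<not> contains T pe}"

definition friendly :: "pattern \<Rightarrow> bool" where
  "friendly pe \<longleftrightarrow> (case pe of (P, e) \<Rightarrow>
     (let k = length (inorder P) in
       is_pattern pe \<and>
       has_parent P k \<and> cL P k \<noteq> None \<and>
       (\<forall>j \<in> set (butlast (rbranch P)) - set_option (root_of P). \<not> e j) \<and>
       (e k \<longrightarrow> (\<forall>c. cL P k = Some c \<longrightarrow> \<not> e c))))"

text \<open>Up-rotation of vertex j (defined iff j is a right child).\<close>
fun rot_up :: "nat \<Rightarrow> nat tree \<Rightarrow> nat tree option" where
  "rot_up j Leaf = None"
| "rot_up j (Node l x r) =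
     (if x = j then None
      else if j \<in> set_tree l then map_option (\<lambda>l'. Node l' x r) (rot_up j l)
      else (case r of Leaf \<Rightarrow> None
            | Node y c z \<Rightarrow>
                (if c = j then Some (Node (Node l x y) j z)
                 else map_option (\<lambda>r'. Node l x r') (rot_up j r))))"

text \<open>Down-rotation of vertex j (defined iff j has a left child).\<close>
fun rot_down :: "nat \<Rightarrow> nat tree \<Rightarrow> nat tree option" where
  "rot_down j Leaf = None"
| "rot_down j (Node l x r) =
     (if x = j then (case l of Leaf \<Rightarrow> None | Node a i y \<Rightarrow> Some (Node a i (Node y j r)))
      else if j \<in> set_tree l then map_option (\<lambda>l'. Node l' x r) (rot_down j l)
      else map_option (\<lambda>r'. Node l x r') (rot_down j r))"

text \<open>Direction: True = up, False = down.\<close>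
definition rot :: "bool \<Rightarrow> nat \<Rightarrow> nat tree \<Rightarrow> nat tree option" where
  "rot up j t = (if up then rot_up j t else rot_down j t)"

fun slide :: "bool \<Rightarrow> nat \<Rightarrow> nat \<Rightarrow> nat tree \<Rightarrow> nat tree option" where
  "slide up j 0 t = Some t"
| "slide up j (Suc d) t = (case rot up j t of None \<Rightarrow> None | Some t' \<Rightarrow> slide up j d t')"

definition minimal_slide ::
  "nat tree set \<Rightarrow> bool \<Rightarrow> nat \<Rightarrow> nat tree \<Rightarrow> nat tree \<Rightarrow> bool" where
  "minimal_slide L up j T T' \<longleftrightarrow>
     (\<exists>d \<ge> 1. slide up j d T = Some T' \<and> T' \<in> L \<and>
        (\<forall>d'. 1 \<le> d' \<and> d' < d \<longrightarrow> (\<forall>t. slide up j d' T = Some t \<longrightarrow> t \<notin> L)))"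

text \<open>Algorithm S.  V is the list of trees visited so far (in order); the most
  recently visited tree is last V.\<close>
definition S_cand :: "nat tree set \<Rightarrow> nat tree list \<Rightarrow> nat \<Rightarrow> bool \<Rightarrow> nat tree \<Rightarrow> bool" where
  "S_cand L V j up T' \<longleftrightarrow> minimal_slide L up j (last V) T' \<and> T' \<notin> set V"

definition S_good :: "nat tree set \<Rightarrow> nat tree list \<Rightarrow> nat \<Rightarrow> bool" where
  "S_good L V j \<longleftrightarrow> (\<exists>up T'. S_cand L V j up T')"

definition S_largest :: "nat tree set \<Rightarrow> nat tree list \<Rightarrow> nat \<Rightarrow> bool" where
  "S_largest L V j \<longleftrightarrow> S_good L V j \<and> (\<forall>j'. S_good L V j' \<longrightarrow> j' \<le> j)"

definition S_step :: "nat tree set \<Rightarrow> nat tree list \<Rightarrow> nat tree \<Rightarrow> bool" where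
  "S_step L V T' \<longleftrightarrow>
     (\<exists>j. S_largest L V j \<and>
        (\<exists>up. S_cand L V j up T' \<and> \<not> (\<exists>T''. S_cand L V j (\<not> up) T'')))"

definition S_stop :: "nat tree set \<Rightarrow> nat tree list \<Rightarrow> bool" where
  "S_stop L V \<longleftrightarrow>
     (\<forall>j. \<not> S_good L V j) \<or>
     (\<exists>j. S_largest L V j \<and> (\<exists>T1 T2. S_cand L V j True T1 \<and> S_cand L V j False T2))"

definition S_run :: "nat tree set \<Rightarrow> nat tree \<Rightarrow> nat tree list \<Rightarrow> bool" where
  "S_run L T0 xs \<longleftrightarrow>
     xs \<noteq> [] \<and> hd xs = T0 \<and>
     (\<forall>i. Suc i < length xs \<longrightarrow> S_step L (take (Suc i) xs) (xs ! Suc i)) \<and>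
     S_stop L xs"

end

theory Submission
  imports Defs
begin

text \<open>Every tree with vertices \<open>1, \<dots>, n\<close> arises from exactly one tree \<open>t\<close> with vertices
  \<open>1, \<dots>, n - 1\<close> by inserting \<open>n\<close> at some depth of the right branch of \<open>t\<close>.  For friendly
  patterns, removing \<open>n\<close> preserves avoidance, and so does inserting \<open>n\<close> at the root or at the bottom
  of the right branch.  Hence, if Algorithm S lists the avoiding trees with \<open>n - 1\<close> vertices,
  the avoiding trees with \<open>n\<close> vertices are listed by letting \<open>n\<close> run through all admissible depths of
  the right branch of each of these trees in turn, alternately upwards and downwards.  This zigzag
  list is what Algorithm S produces: inside a block \<open>n\<close> is the largest vertex and its minimal slide
  in the direction of travel leads to the next tree, while between two blocks \<open>n\<close> sits at an end
  of the right branch, where it commutes with all rotations of smaller vertices, so that the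
  algorithm repeats the step it made on the trees with \<open>n - 1\<close> vertices.\<close>

section \<open>Subtrees, children and the right branch\<close>

abbreviation distinct_tree :: "nat tree \<Rightarrow> bool" where
  "distinct_tree t \<equiv> distinct (inorder t)"

lemma root_of_simps [simp]: "root_of Leaf = None" "root_of (Node l a r) = Some a"
  by (simp_all add: root_of_def)

lemma subtree_at_notin [simp]: "i \<notin> set_tree t \<Longrightarrow> subtree_at t i = Leaf"
  by (induction t) auto

lemma set_subtree_at_subset: "set_tree (subtree_at t i) \<subseteq> set_tree t"
  by (induction t) auto

lemma subtree_at_eq_Node: "i \<in> set_tree t \<Longrightarrow> \<exists>l r. subtree_at t i = Node l i r"
  by (induction t) auto

lemma in_subtree_at_self: "i \<in> set_tree t \<Longrightarrow> i \<in> set_tree (subtree_at t i)"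
  using subtree_at_eq_Node by fastforce

lemma distinct_subtree_at: "distinct_tree t \<Longrightarrow> distinct_tree (subtree_at t i)"
  by (induction t) auto

lemma subtree_at_subtree_at:
  "distinct_tree t \<Longrightarrow> v \<in> set_tree (subtree_at t u) \<Longrightarrow> subtree_at (subtree_at t u) v = subtree_at t v"
proof (induction t)
  case (Node l x r)
  then show ?case
    using set_subtree_at_subset[of l u] set_subtree_at_subset[of r u] by auto
qed simp

lemma Lsub_root [simp]: "Lsub (Node l x r) x = l"
  and Rsub_root [simp]: "Rsub (Node l x r) x = r"
  by (simp_all add: Lsub_def Rsub_def)

lemma Lsub_notin [simp]: "u \<notin> set_tree t \<Longrightarrow> Lsub t u = Leaf"
  and Rsub_notin [simp]: "u \<notin> set_tree t \<Longrightarrow> Rsub t u = Leaf"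
  by (simp_all add: Lsub_def Rsub_def)

lemma Lsub_Node:
    "Lsub (Node l x r) u = (if u = x then l else if u \<in> set_tree l then Lsub l u else Lsub r u)"
  and Rsub_Node:
    "Rsub (Node l x r) u = (if u = x then r else if u \<in> set_tree l then Rsub l u else Rsub r u)"
  by (simp_all add: Lsub_def Rsub_def)

lemma cL_Node:
    "cL (Node l x r) u = (if u = x then root_of l else if u \<in> set_tree l then cL l u else cL r u)"
  and cR_Node:
    "cR (Node l x r) u = (if u = x then root_of r else if u \<in> set_tree l then cR l u else cR r u)"
  by (simp_all add: cL_def cR_def Lsub_Node Rsub_Node)

lemma set_Lsub_subset: "set_tree (Lsub t u) \<subseteq> set_tree (subtree_at t u)"
  and set_Rsub_subset: "set_tree (Rsub t u) \<subseteq> set_tree (subtree_at t u)"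
  by (auto simp: Lsub_def Rsub_def split: tree.splits)

lemma subtree_at_Node_child:
  assumes "distinct_tree t" "subtree_at t u = Node l u r" "v \<in> set_tree l \<or> v \<in> set_tree r"
  shows "subtree_at t v = (if v \<in> set_tree l then subtree_at l v else subtree_at r v)"
proof -
  have "distinct_tree (Node l u r)" using distinct_subtree_at[OF assms(1), of u] assms(2) by simp
  then have "subtree_at (Node l u r) v = (if v \<in> set_tree l then subtree_at l v else subtree_at r v)"
    using assms(3) by auto
  then show ?thesis using subtree_at_subtree_at[OF assms(1), of v u] assms(2,3) by auto
qed

lemma set_subtree_at_Lsub:
  assumes "distinct_tree t" "v \<in> set_tree (Lsub t u)"
  shows "set_tree (subtree_at t v) \<subseteq> set_tree (Lsub t u)"
proof -
  have "u \<in> set_tree t" using assms(2) by (cases "u \<in> set_tree t") auto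
  then obtain l r where s: "subtree_at t u = Node l u r" using subtree_at_eq_Node by blast
  with assms show ?thesis
    using subtree_at_Node_child[OF assms(1) s] set_subtree_at_subset[of l v] by (auto simp: Lsub_def)
qed

lemma set_subtree_at_Rsub:
  assumes "distinct_tree t" "v \<in> set_tree (Rsub t u)"
  shows "set_tree (subtree_at t v) \<subseteq> set_tree (Rsub t u)"
proof -
  have "u \<in> set_tree t" using assms(2) by (cases "u \<in> set_tree t") auto
  then obtain l r where s: "subtree_at t u = Node l u r" using subtree_at_eq_Node by blast
  have "v \<notin> set_tree l" using assms s distinct_subtree_at[OF assms(1), of u] by (auto simp: Rsub_def)
  with assms s show ?thesis
    using subtree_at_Node_child[OF assms(1) s] set_subtree_at_subset[of r v] by (auto simp: Rsub_def)
qed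

lemma cL_in_Lsub: "cL t u = Some v \<Longrightarrow> v \<in> set_tree (Lsub t u)"
  and cR_in_Rsub: "cR t u = Some v \<Longrightarrow> v \<in> set_tree (Rsub t u)"
  by (auto simp: cL_def cR_def root_of_def split: tree.splits)

lemma cL_SomeD: "cL t p = Some i \<Longrightarrow> i \<in> set_tree t \<and> p \<in> set_tree t"
  and cR_SomeD: "cR t p = Some i \<Longrightarrow> i \<in> set_tree t \<and> p \<in> set_tree t"
  using cL_in_Lsub[of t p i] cR_in_Rsub[of t p i] set_Lsub_subset[of t p] set_Rsub_subset[of t p]
    set_subtree_at_subset[of t p]
  by (cases "p \<in> set_tree t"; auto)+

lemma subtree_at_cL:
  assumes "distinct_tree t" "cL t u = Some v" shows "subtree_at t v = Lsub t u"
proof -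
  have "u \<in> set_tree t" using cL_SomeD[OF assms(2)] by blast
  then obtain l r where s: "subtree_at t u = Node l u r" using subtree_at_eq_Node by blast
  then obtain a b where "l = Node a v b" using assms(2) by (cases l) (auto simp: cL_def Lsub_def)
  then show ?thesis using subtree_at_Node_child[OF assms(1) s] s by (simp add: Lsub_def)
qed

lemma subtree_at_cR:
  assumes "distinct_tree t" "cR t u = Some v" shows "subtree_at t v = Rsub t u"
proof -
  have "u \<in> set_tree t" using cR_SomeD[OF assms(2)] by blast
  then obtain l r where s: "subtree_at t u = Node l u r" using subtree_at_eq_Node by blast
  then obtain a b where r: "r = Node a v b" using assms(2) by (cases r) (auto simp: cR_def Rsub_def)
  have "v \<notin> set_tree l" using distinct_subtree_at[OF assms(1), of u] s r by auto
  then show ?thesis using subtree_at_Node_child[OF assms(1) s] s r by (simp add: Rsub_def)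
qed

lemma root_notin_Lsub:
  "distinct_tree (Node l x r) \<Longrightarrow> x \<notin> set_tree (Lsub (Node l x r) w)"
  and root_notin_Rsub:
  "distinct_tree (Node l x r) \<Longrightarrow> x \<notin> set_tree (Rsub (Node l x r) w)"
  using set_Lsub_subset[of l w] set_Lsub_subset[of r w] set_Rsub_subset[of l w] set_Rsub_subset[of r w]
    set_subtree_at_subset[of l w] set_subtree_at_subset[of r w]
  by (auto simp: Lsub_Node Rsub_Node)

lemma cR_inj:
  "distinct_tree t \<Longrightarrow> cR t p = Some i \<Longrightarrow> cR t p' = Some i \<Longrightarrow> p = p'"
proof (induction t)
  case (Node l x r)
  have root_r: "root_of r = Some i \<Longrightarrow> i \<in> set_tree r" by (cases r) auto
  have not_root_r: "root_of r \<noteq> Some i" if "cR r q = Some i" for q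
    using that root_notin_Rsub[of _ i] cR_in_Rsub[of r q i] Node.prems(1) by (cases r) auto
  from Node show ?case
    using root_r not_root_r cR_SomeD[of l _ i] cR_SomeD[of r _ i]
    by (auto simp: cR_Node split: if_splits)
qed (simp add: cR_def)

lemma set_rbranch_subset: "set (rbranch t) \<subseteq> set_tree t"
  by (induction t) auto

lemma last_rbranch_eq_last_inorder: "t \<noteq> Leaf \<Longrightarrow> last (rbranch t) = last (inorder t)"
proof (induction t)
  case (Node l x r) then show ?case by (cases r) auto
qed simp

lemma in_rbranch_or_Lsub:
  "distinct_tree t \<Longrightarrow> q \<in> set_tree t \<Longrightarrow> q \<in> set (rbranch t) \<or> (\<exists>w. q \<in> set_tree (Lsub t w))"
proof (induction t)
  case (Node l x r)
  show ?case
  proof (cases "q = x \<or> q \<in> set_tree l")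
    case True then show ?thesis by (metis Lsub_root rbranch.simps(2) list.set_intros(1))
  next
    case False
    then have "q \<in> set (rbranch r) \<or> (\<exists>w. q \<in> set_tree (Lsub r w))" using Node by auto
    moreover have "Lsub (Node l x r) w = Lsub r w" if "q \<in> set_tree (Lsub r w)" for w
      using that Node.prems(1) by (cases "w \<in> set_tree r") (auto simp: Lsub_Node)
    ultimately show ?thesis by (metis list.set_intros(2) rbranch.simps(2))
  qed
qed simp

lemma rbranch_notin_Lsub:
  "distinct_tree t \<Longrightarrow> v \<in> set (rbranch t) \<Longrightarrow> v \<notin> set_tree (Lsub t u)"
proof (induction t)
  case (Node l x r)
  have "v \<notin> set_tree l" using Node.prems set_rbranch_subset[of r] by auto
  then show ?case
    using Node set_Lsub_subset[of l u] set_Lsub_subset[of r u] set_subtree_at_subset[of l u]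
      set_subtree_at_subset[of r u] root_notin_Lsub[of l x r u]
    by (auto simp: Lsub_Node)
qed simp

lemma cR_eq_None_last_rbranch:
  "distinct_tree t \<Longrightarrow> q \<in> set (rbranch t) \<Longrightarrow> cR t q = None \<longleftrightarrow> q = last (rbranch t)"
proof (induction t)
  case (Node l x r)
  have last_r: "r \<noteq> Leaf \<Longrightarrow> last (rbranch r) \<in> set_tree r"
    using set_rbranch_subset[of r] last_in_set[of "rbranch r"] by (cases r) auto
  show ?case
  proof (cases "q = x")
    case True
    then show ?thesis using Node.prems(1) last_r by (cases r) (auto simp: cR_Node)
  next
    case False
    then have "q \<in> set (rbranch r)" "q \<in> set_tree r" using Node.prems set_rbranch_subset[of r] by auto
    then show ?thesis using Node False by (cases r) (auto simp: cR_Node)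
  qed
qed simp

definition embedding :: "nat tree \<Rightarrow> nat tree \<Rightarrow> (nat \<Rightarrow> bool) \<Rightarrow> (nat \<Rightarrow> nat) \<Rightarrow> bool" where
  "embedding T P e f \<longleftrightarrow> inj_on f (set_tree P) \<and> f ` set_tree P \<subseteq> set_tree T \<and>
    (\<forall>p i. cL P p = Some i \<longrightarrow>
       (if e i then cL T (f p) = Some (f i) else f i \<in> set_tree (Lsub T (f p)))) \<and>
    (\<forall>p i. cR P p = Some i \<longrightarrow>
       (if e i then cR T (f p) = Some (f i) else f i \<in> set_tree (Rsub T (f p))))"

lemma contains_iff_embedding: "contains T (P, e) \<longleftrightarrow> (\<exists>f. embedding T P e f)"
  by (simp add: contains_def embedding_def)

lemma embedding_cL: "embedding T P e f \<Longrightarrow> cL P p = Some i \<Longrightarrow> f i \<in> set_tree (Lsub T (f p))"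
  and embedding_cR: "embedding T P e f \<Longrightarrow> cR P p = Some i \<Longrightarrow> f i \<in> set_tree (Rsub T (f p))"
  unfolding embedding_def by (metis cL_in_Lsub, metis cR_in_Rsub)

lemma embedding_subtree_at:
  assumes P: "distinct_tree P" and T: "distinct_tree T" and f: "embedding T P e f"
  shows "s = subtree_at P p \<Longrightarrow> p \<in> set_tree P \<Longrightarrow> q \<in> set_tree s \<Longrightarrow>
    f q \<in> set_tree (subtree_at T (f p))"
proof (induction s arbitrary: p q)
  case (Node l x r)
  have s: "subtree_at P p = Node l p r" using Node.prems(1,2) subtree_at_eq_Node by fastforce
  consider "q = p" | "q \<in> set_tree l" | "q \<in> set_tree r" using Node.prems s by auto
  then show ?case
  proof cases
    case 1
    then show ?thesis using f Node.prems(2) in_subtree_at_self by (auto simp: embedding_def)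
  next
    case 2
    then obtain l1 c l2 where "l = Node l1 c l2" by (cases l) auto
    then have c: "cL P p = Some c" using s by (simp add: cL_def Lsub_def)
    then have l: "subtree_at P c = l" using subtree_at_cL[OF P] s by (simp add: Lsub_def)
    have "f q \<in> set_tree (subtree_at T (f c))"
      using Node.IH(1)[OF l[symmetric] _ 2] cL_SomeD[OF c] by blast
    then show ?thesis
      using set_subtree_at_Lsub[OF T embedding_cL[OF f c]] set_Lsub_subset by blast
  next
    case 3
    then obtain r1 c r2 where "r = Node r1 c r2" by (cases r) auto
    then have c: "cR P p = Some c" using s by (simp add: cR_def Rsub_def)
    then have r: "subtree_at P c = r" using subtree_at_cR[OF P] s by (simp add: Rsub_def)
    have "f q \<in> set_tree (subtree_at T (f c))"
      using Node.IH(2)[OF r[symmetric] _ 3] cR_SomeD[OF c] by blast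
    then show ?thesis
      using set_subtree_at_Rsub[OF T embedding_cR[OF f c]] set_Rsub_subset by blast
  qed
qed simp

lemma embedding_Lsub:
  assumes "distinct_tree P" "distinct_tree T" "embedding T P e f" "q \<in> set_tree (Lsub P p)"
  shows "f q \<in> set_tree (Lsub T (f p))"
proof -
  obtain c where c: "cL P p = Some c" using assms(4) by (cases "Lsub P p") (auto simp: cL_def)
  have "f q \<in> set_tree (subtree_at T (f c))"
    using embedding_subtree_at[OF assms(1-3) subtree_at_cL[OF assms(1) c, symmetric]] cL_SomeD[OF c] assms(4)
    by blast
  then show ?thesis using set_subtree_at_Lsub[OF assms(2) embedding_cL[OF assms(3) c]] by blast
qed

lemma embedding_Rsub:
  assumes "distinct_tree P" "distinct_tree T" "embedding T P e f" "q \<in> set_tree (Rsub P p)"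
  shows "f q \<in> set_tree (Rsub T (f p))"
proof -
  obtain c where c: "cR P p = Some c" using assms(4) by (cases "Rsub P p") (auto simp: cR_def)
  have "f q \<in> set_tree (subtree_at T (f c))"
    using embedding_subtree_at[OF assms(1-3) subtree_at_cR[OF assms(1) c, symmetric]] cR_SomeD[OF c] assms(4)
    by blast
  then show ?thesis using set_subtree_at_Rsub[OF assms(2) embedding_cR[OF assms(3) c]] by blast
qed

section \<open>Inserting the largest vertex on the right branch\<close>

text \<open>\<open>ins_rb n i t\<close> puts \<open>n\<close> at depth \<open>i\<close> of the right branch of \<open>t\<close> (depth \<open>0\<close> is the root);
  the part of the branch from that depth on becomes the left subtree of \<open>n\<close>.\<close>

fun ins_rb :: "nat \<Rightarrow> nat \<Rightarrow> nat tree \<Rightarrow> nat tree" where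
  "ins_rb n 0 t = Node t n Leaf"
| "ins_rb n (Suc i) Leaf = Node Leaf n Leaf"
| "ins_rb n (Suc i) (Node l x r) = Node l x (ins_rb n i r)"

abbreviation rb_length :: "nat tree \<Rightarrow> nat" where
  "rb_length t \<equiv> length (rbranch t)"

lemma set_tree_ins_rb [simp]: "set_tree (ins_rb n i t) = insert n (set_tree t)"
  by (induction n i t rule: ins_rb.induct) auto

lemma ins_rb_neq_Leaf [simp]: "ins_rb n i t \<noteq> Leaf" "Leaf \<noteq> ins_rb n i t"
  by (cases "(n, i, t)" rule: ins_rb.cases; auto)+

lemma inorder_ins_rb: "i \<le> rb_length t \<Longrightarrow> inorder (ins_rb n i t) = inorder t @ [n]"
  by (induction n i t rule: ins_rb.induct) auto

lemma distinct_ins_rb: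
  "i \<le> rb_length t \<Longrightarrow> distinct_tree t \<Longrightarrow> n \<notin> set_tree t \<Longrightarrow> distinct_tree (ins_rb n i t)"
  by (simp add: inorder_ins_rb)

lemma in_rbranch_ins_rb: "n \<in> set (rbranch (ins_rb n i t))"
  by (induction n i t rule: ins_rb.induct) auto

lemma root_of_ins_rb:
  "i \<le> rb_length t \<Longrightarrow> root_of (ins_rb n i t) = (if i = 0 then Some n else root_of t)"
  by (cases "(n, i, t)" rule: ins_rb.cases) auto

lemma ins_rb_inj:
  "i \<le> rb_length t \<Longrightarrow> i' \<le> rb_length t' \<Longrightarrow> ins_rb n i t = ins_rb n i' t' \<Longrightarrow> i = i' \<and> t = t'"
proof (induction n i t arbitrary: i' t' rule: ins_rb.induct)
  case (1 n t)
  then show ?case by (cases "(n, i', t')" rule: ins_rb.cases) auto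
next
  case (3 n i l x r)
  then show ?case by (cases "(n, i', t')" rule: ins_rb.cases) auto
qed simp

lemma ins_rb_cases:
  "inorder T = xs @ [n] \<Longrightarrow> \<exists>t i. i \<le> rb_length t \<and> inorder t = xs \<and> T = ins_rb n i t"
proof (induction T arbitrary: xs)
  case (Node l x r)
  show ?case
  proof (cases "r = Leaf")
    case True
    then show ?thesis using Node.prems by (intro exI[of _ l] exI[of _ 0]) auto
  next
    case False
    then obtain ys where "inorder r = ys @ [n]" "xs = inorder l @ x # ys"
      using Node.prems by (cases "inorder r" rule: rev_cases) auto
    with Node.IH(2) obtain t i where "i \<le> rb_length t" "inorder t = ys" "r = ins_rb n i t" by blast
    then show ?thesis using \<open>xs = _\<close> by (intro exI[of _ "Node l x t"] exI[of _ "Suc i"]) auto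
  qed
qed simp

lemma subtree_at_ins_rb:
  "i \<le> rb_length t \<Longrightarrow> u \<in> set_tree t \<Longrightarrow> n \<notin> set_tree t \<Longrightarrow>
   subtree_at (ins_rb n i t) u = subtree_at t u \<or>
   (\<exists>j l r. j \<le> rb_length r \<and> subtree_at t u = Node l u r \<and> subtree_at (ins_rb n i t) u = Node l u (ins_rb n j r))"
  by (induction n i t rule: ins_rb.induct) auto

lemma Lsub_ins_rb:
  "i \<le> rb_length t \<Longrightarrow> u \<in> set_tree t \<Longrightarrow> n \<notin> set_tree t \<Longrightarrow> Lsub (ins_rb n i t) u = Lsub t u"
  using subtree_at_ins_rb[of i t u n] by (auto simp: Lsub_def)

lemma cL_ins_rb:
  "i \<le> rb_length t \<Longrightarrow> u \<in> set_tree t \<Longrightarrow> n \<notin> set_tree t \<Longrightarrow> cL (ins_rb n i t) u = cL t u"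
  by (simp add: cL_def Lsub_ins_rb)

lemma set_Rsub_ins_rb:
  assumes "i \<le> rb_length t" "u \<in> set_tree t" "n \<notin> set_tree t"
  shows "set_tree (Rsub t u) \<subseteq> set_tree (Rsub (ins_rb n i t) u)"
    and "set_tree (Rsub (ins_rb n i t) u) \<subseteq> insert n (set_tree (Rsub t u))"
  using subtree_at_ins_rb[OF assms] by (auto simp: Rsub_def)

lemma cR_ins_rb_SomeD:
  "i \<le> rb_length t \<Longrightarrow> u \<in> set_tree t \<Longrightarrow> n \<notin> set_tree t \<Longrightarrow>
   cR (ins_rb n i t) u = Some v \<Longrightarrow> v \<noteq> n \<Longrightarrow> cR t u = Some v"
  using subtree_at_ins_rb[of i t u n] by (auto simp: cR_def Rsub_def root_of_ins_rb split: if_splits)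

lemma cR_ins_rb:
  assumes "i \<le> rb_length t" "u \<in> set_tree t" "n \<notin> set_tree t" "distinct_tree t" "cR t u = Some v"
  shows "cR (ins_rb n i t) u = Some v \<or> (cR (ins_rb n i t) u = Some n \<and> cL (ins_rb n i t) n = Some v)"
  using subtree_at_ins_rb[OF assms(1-3)]
proof
  assume "subtree_at (ins_rb n i t) u = subtree_at t u"
  then show ?thesis using assms(5) by (simp add: cR_def Rsub_def)
next
  let ?T = "ins_rb n i t"
  assume "\<exists>j l r. j \<le> rb_length r \<and> subtree_at t u = Node l u r \<and> subtree_at ?T u = Node l u (ins_rb n j r)"
  then obtain j l r where s: "j \<le> rb_length r" "subtree_at t u = Node l u r" "subtree_at ?T u = Node l u (ins_rb n j r)"
    by blast
  have root_r: "root_of r = Some v" using assms(5) s(2) by (simp add: cR_def Rsub_def)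
  show ?thesis
  proof (cases j)
    case (Suc j')
    then obtain a b c where "r = Node a b c" using s(1) by (cases r) auto
    then show ?thesis using s Suc root_r by (simp add: cR_def Rsub_def)
  next
    case 0
    have "distinct_tree ?T" using distinct_ins_rb assms(1,3,4) by blast
    moreover have "n \<in> set_tree (subtree_at ?T u)" using s(3) 0 by simp
    ultimately have "subtree_at ?T n = subtree_at (subtree_at ?T u) n" using subtree_at_subtree_at by metis
    also have "\<dots> = Node r n Leaf"
      using s 0 assms(2,3) set_subtree_at_subset[of t u] by auto
    finally show ?thesis using s(3) 0 root_r by (simp add: cL_def Lsub_def cR_def Rsub_def)
  qed
qed

lemma cL_ins_rb_new:
  "i \<le> rb_length t \<Longrightarrow> n \<notin> set_tree t \<Longrightarrow> distinct_tree t \<Longrightarrow> cL (ins_rb n i t) n = Some v \<Longrightarrow>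
   v \<in> set (rbranch t) \<and> set_tree (Lsub t v) \<subseteq> set_tree (Lsub (ins_rb n i t) n)"
proof (induction n i t rule: ins_rb.induct)
  case (1 n t)
  then obtain a b where "t = Node a v b" by (cases t) (auto simp: cL_def)
  then show ?case by auto
next
  case (3 n i l x r)
  then have "v \<in> set (rbranch r) \<and> set_tree (Lsub r v) \<subseteq> set_tree (Lsub (ins_rb n i r) n)"
    by (auto simp: cL_Node)
  moreover have "v \<noteq> x" "v \<notin> set_tree l"
    using calculation 3(4) set_rbranch_subset[of r] by auto
  ultimately show ?case using 3(3) by (auto simp: Lsub_Node)
qed simp

lemma subtree_at_ins_rb_bottom: "n \<notin> set_tree t \<Longrightarrow> subtree_at (ins_rb n (rb_length t) t) n = Node Leaf n Leaf"
  by (induction t) auto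

section \<open>Friendly patterns\<close>

lemma friendlyE:
  assumes "friendly (P, e)"
  obtains l x r k where "P = Node l x r" "distinct_tree P" "k = last (rbranch P)" "k \<noteq> x"
    "cL P k \<noteq> None" "\<forall>j \<in> set (butlast (rbranch P)) - {x}. \<not> e j"
    "e k \<longrightarrow> (\<forall>c. cL P k = Some c \<longrightarrow> \<not> e c)"
proof -
  define k where "k = length (inorder P)"
  have P: "inorder P = [1..<Suc k]" "has_parent P k" "cL P k \<noteq> None"
    "\<forall>j \<in> set (butlast (rbranch P)) - set_option (root_of P). \<not> e j"
    "e k \<longrightarrow> (\<forall>c. cL P k = Some c \<longrightarrow> \<not> e c)"
    using assms by (auto simp: friendly_def is_pattern_def Tn_def Let_def k_def)
  obtain l x r where Pn: "P = Node l x r" using P(3) by (cases P) (auto simp: cL_def)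
  have d: "distinct_tree P" using P(1) by simp
  have "k \<noteq> 0" using Pn by (simp add: k_def)
  then have "last (inorder P) = k" unfolding P(1) by simp
  then have k: "k = last (rbranch P)" using last_rbranch_eq_last_inorder[of P] Pn by simp
  obtain p where "cL P p = Some k \<or> cR P p = Some k" using P(2) by (auto simp: has_parent_def)
  then have "k \<in> set_tree (Lsub P p) \<or> k \<in> set_tree (Rsub P p)" using cL_in_Lsub cR_in_Rsub by blast
  then have "k \<noteq> x" using root_notin_Lsub[of l x r p] root_notin_Rsub[of l x r p] d Pn by auto
  with that[OF Pn d k] P Pn show ?thesis by auto
qed

lemma embedding_ins_rb_imp_embedding:
  assumes g: "embedding (ins_rb n i t) P e g" and i: "i \<le> rb_length t" and n: "n \<notin> set_tree t"
    and gn: "n \<notin> g ` set_tree P"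
  shows "embedding t P e g"
proof -
  let ?T = "ins_rb n i t"
  have im: "g ` set_tree P \<subseteq> set_tree t" using g gn by (auto simp: embedding_def)
  show ?thesis unfolding embedding_def
  proof (intro conjI allI impI)
    show "inj_on g (set_tree P)" using g by (simp add: embedding_def)
    show "g ` set_tree P \<subseteq> set_tree t" by fact
  next
    fix p c assume pc: "cL P p = Some c"
    then have gp: "g p \<in> set_tree t" using im cL_SomeD by blast
    have "if e c then cL ?T (g p) = Some (g c) else g c \<in> set_tree (Lsub ?T (g p))"
      using g pc by (simp add: embedding_def)
    then show "if e c then cL t (g p) = Some (g c) else g c \<in> set_tree (Lsub t (g p))"
      unfolding cL_ins_rb[OF i gp n] Lsub_ins_rb[OF i gp n] .
  next
    fix p c assume pc: "cR P p = Some c"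
    then have "g p \<in> set_tree t" "g c \<noteq> n" using im n cR_SomeD by blast+
    moreover have "if e c then cR ?T (g p) = Some (g c) else g c \<in> set_tree (Rsub ?T (g p))"
      using g pc by (simp add: embedding_def)
    ultimately show "if e c then cR t (g p) = Some (g c) else g c \<in> set_tree (Rsub t (g p))"
      using cR_ins_rb_SomeD[OF i _ n] set_Rsub_ins_rb(2)[OF i _ n] by (auto split: if_splits)
  qed
qed

text \<open>If the new root \<open>n\<close> lay in the image of an embedding, it would be the image of the root of
  the pattern, whose right child then had nowhere to go.\<close>

lemma contains_ins_rb_rootD:
  assumes F: "friendly (P, e)" and "contains (ins_rb n 0 t) (P, e)"
    and d: "distinct_tree t" and n: "n \<notin> set_tree t"
  shows "contains t (P, e)"
proof -
  obtain l x r k where P: "P = Node l x r" "distinct_tree P" "k = last (rbranch P)" "k \<noteq> x"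
    by (rule friendlyE[OF F])
  let ?T = "ins_rb n 0 t"
  obtain g where g: "embedding ?T P e g" using assms(2) by (auto simp: contains_iff_embedding)
  have dT: "distinct_tree ?T" using d n by simp
  have "n \<notin> g ` set_tree P"
  proof
    assume "n \<in> g ` set_tree P"
    then obtain q where q: "q \<in> set_tree P" "g q = n" by blast
    show False
    proof (cases "q = x")
      case True
      obtain a c b where "r = Node a c b" using P by (cases r) auto
      then have "cR P x = Some c" using P(1) by (simp add: cR_def)
      then show False using embedding_cR[OF g] True q(2) by fastforce
    next
      case False
      then have "q \<in> set_tree (Lsub P x) \<or> q \<in> set_tree (Rsub P x)" using q P(1) by auto
      then have "n \<in> set_tree (Lsub ?T (g x)) \<or> n \<in> set_tree (Rsub ?T (g x))"
        using embedding_Lsub[OF P(2) dT g] embedding_Rsub[OF P(2) dT g] q(2) by blast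
      then show False using root_notin_Lsub[of t n Leaf] root_notin_Rsub[of t n Leaf] dT by simp
    qed
  qed
  then show ?thesis
    using embedding_ins_rb_imp_embedding[OF g _ n] by (auto simp: contains_iff_embedding)
qed

text \<open>A vertex mapped to the new leaf \<open>n\<close> is a leaf of the pattern lying on its right branch,
  hence it is the largest vertex of the pattern, which is not a leaf.\<close>

lemma contains_ins_rb_bottomD:
  assumes F: "friendly (P, e)" and "contains (ins_rb n (rb_length t) t) (P, e)"
    and d: "distinct_tree t" and n: "n \<notin> set_tree t"
  shows "contains t (P, e)"
proof -
  obtain l x r k where P: "P = Node l x r" "distinct_tree P" "k = last (rbranch P)" "cL P k \<noteq> None"
    by (rule friendlyE[OF F])
  let ?T = "ins_rb n (rb_length t) t"
  obtain g where g: "embedding ?T P e g" using assms(2) by (auto simp: contains_iff_embedding)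
  have dT: "distinct_tree ?T" using distinct_ins_rb d n by blast
  have leaf: "Lsub ?T n = Leaf" "Rsub ?T n = Leaf"
    using subtree_at_ins_rb_bottom[OF n] by (simp_all add: Lsub_def Rsub_def)
  have "n \<notin> g ` set_tree P"
  proof
    assume "n \<in> g ` set_tree P"
    then obtain q where q: "q \<in> set_tree P" "g q = n" by blast
    have "cL P q = None" using embedding_cL[OF g, of q] leaf q(2) by (cases "cL P q") auto
    moreover have "cR P q = None" using embedding_cR[OF g, of q] leaf q(2) by (cases "cR P q") auto
    moreover have "q \<notin> set_tree (Lsub P w)" for w
      using embedding_Lsub[OF P(2) dT g, of q w] rbranch_notin_Lsub[OF dT in_rbranch_ins_rb] q(2) by auto
    then have "q \<in> set (rbranch P)" using in_rbranch_or_Lsub[OF P(2) q(1)] by blast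
    ultimately show False using cR_eq_None_last_rbranch[OF P(2)] P(3,4) by simp
  qed
  then show ?thesis
    using embedding_ins_rb_imp_embedding[OF g _ n] by (auto simp: contains_iff_embedding)
qed

lemma embedding_ins_rb_edges:
  assumes f: "embedding t P e f" and i: "i \<le> rb_length t" and n: "n \<notin> set_tree t"
    and d: "distinct_tree t"
  shows "cL P p = Some c \<Longrightarrow>
      if e c then cL (ins_rb n i t) (f p) = Some (f c) else f c \<in> set_tree (Lsub (ins_rb n i t) (f p))"
    and "cR P p = Some c \<Longrightarrow> \<not> e c \<Longrightarrow> f c \<in> set_tree (Rsub (ins_rb n i t) (f p))"
    and "cR P p = Some c \<Longrightarrow> e c \<Longrightarrow> cR (ins_rb n i t) (f p) = Some (f c) \<or>
      (cR (ins_rb n i t) (f p) = Some n \<and> cL (ins_rb n i t) n = Some (f c))"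
proof -
  have im: "f ` set_tree P \<subseteq> set_tree t" using f by (simp add: embedding_def)
  show "cL P p = Some c \<Longrightarrow>
      if e c then cL (ins_rb n i t) (f p) = Some (f c) else f c \<in> set_tree (Lsub (ins_rb n i t) (f p))"
    using f im cL_SomeD[of P p c] by (auto simp: embedding_def cL_ins_rb[OF i _ n] Lsub_ins_rb[OF i _ n])
  show "cR P p = Some c \<Longrightarrow> \<not> e c \<Longrightarrow> f c \<in> set_tree (Rsub (ins_rb n i t) (f p))"
  proof -
    assume pc: "cR P p = Some c" "\<not> e c"
    then have "f p \<in> set_tree t" "f c \<in> set_tree (Rsub t (f p))"
      using f im cR_SomeD[OF pc(1)] by (auto simp: embedding_def)
    then show ?thesis using set_Rsub_ins_rb(1)[OF i _ n] by blast
  qed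
  show "cR P p = Some c \<Longrightarrow> e c \<Longrightarrow> cR (ins_rb n i t) (f p) = Some (f c) \<or>
      (cR (ins_rb n i t) (f p) = Some n \<and> cL (ins_rb n i t) n = Some (f c))"
  proof -
    assume pc: "cR P p = Some c" "e c"
    then have "f p \<in> set_tree t" "cR t (f p) = Some (f c)"
      using f im cR_SomeD[OF pc(1)] by (auto simp: embedding_def)
    then show ?thesis using cR_ins_rb[OF i _ n d] by blast
  qed
qed

lemma in_set_butlast_or_last: "x \<in> set xs \<Longrightarrow> x \<in> set (butlast xs) \<or> x = last xs"
  by (induction xs) auto

lemma friendly_tight_right_child_in_rbranch:
  assumes F: "friendly (P, e)" and f: "embedding t P e f" and d: "distinct_tree t"
    and c: "cR P a = Some c" "e c" "f c \<in> set (rbranch t)"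
  shows "c = last (rbranch P)"
proof -
  obtain l x r where P: "P = Node l x r" "distinct_tree P" "\<forall>j \<in> set (butlast (rbranch P)) - {x}. \<not> e j"
    by (rule friendlyE[OF F])
  have "c \<notin> set_tree (Lsub P w)" for w
    using embedding_Lsub[OF P(2) d f, of c w] rbranch_notin_Lsub[OF d c(3), of "f w"] by blast
  then have c_rb: "c \<in> set (rbranch P)" using in_rbranch_or_Lsub[OF P(2)] cR_SomeD[OF c(1)] by blast
  moreover have "c \<noteq> x" using root_notin_Rsub[of l x r a] cR_in_Rsub[OF c(1)] P(1,2) by auto
  ultimately have "c \<notin> set (butlast (rbranch P))" using P(3) c(2) by blast
  then show ?thesis using in_set_butlast_or_last[OF c_rb] by blast
qed

lemma distinct_tree_if_friendly: "friendly (P, e) \<Longrightarrow> distinct_tree P"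
  by (elim friendlyE)

lemma friendly_last_rbranch:
  assumes "friendly (P, e)" "k = last (rbranch P)"
  shows "cR P k = None" and "cL P p \<noteq> Some k" and "e k \<Longrightarrow> \<exists>c. cL P k = Some c \<and> \<not> e c"
proof -
  obtain l x r k' where P: "P = Node l x r" "distinct_tree P" "k' = last (rbranch P)" "k' \<noteq> x"
      "cL P k' \<noteq> None" "\<forall>j \<in> set (butlast (rbranch P)) - {x}. \<not> e j"
    and loose: "e k' \<longrightarrow> (\<forall>c. cL P k' = Some c \<longrightarrow> \<not> e c)"
    by (rule friendlyE[OF assms(1)])
  have k: "k \<in> set (rbranch P)" using assms(2) P(1) by simp
  show "cR P k = None" using cR_eq_None_last_rbranch[OF P(2) k] assms(2) by simp
  show "cL P p \<noteq> Some k" using cL_in_Lsub[of P p k] rbranch_notin_Lsub[OF P(2) k, of p] by auto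
  show "\<exists>c. cL P k = Some c \<and> \<not> e c" if "e k" using that P(3,5) loose assms(2) by auto
qed

lemma embedding_ins_rb:
  assumes f: "embedding t P e f" and i: "i \<le> rb_length t" and n: "n \<notin> set_tree t"
    and d: "distinct_tree t"
    and tight: "\<And>a c. cR P a = Some c \<Longrightarrow> e c \<Longrightarrow> cR (ins_rb n i t) (f a) = Some (f c)"
  shows "embedding (ins_rb n i t) P e f"
  unfolding embedding_def
proof (intro conjI allI impI)
  show "inj_on f (set_tree P)" "f ` set_tree P \<subseteq> set_tree (ins_rb n i t)"
    using f by (auto simp: embedding_def)
next
  fix p c assume "cL P p = Some c"
  then show "if e c then cL (ins_rb n i t) (f p) = Some (f c)
    else f c \<in> set_tree (Lsub (ins_rb n i t) (f p))"
    by (rule embedding_ins_rb_edges(1)[OF f i n d])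
next
  fix p c assume "cR P p = Some c"
  then show "if e c then cR (ins_rb n i t) (f p) = Some (f c)
    else f c \<in> set_tree (Rsub (ins_rb n i t) (f p))"
    using embedding_ins_rb_edges(2)[OF f i n d] tight by auto
qed

lemma embedding_ins_rb_redirect:
  assumes F: "friendly (P, e)" and f: "embedding t P e f"
    and i: "i \<le> rb_length t" and n: "n \<notin> set_tree t" and d: "distinct_tree t"
    and k: "k = last (rbranch P)" "e k"
    and a: "cR P a = Some k" "cR (ins_rb n i t) (f a) = Some n" "cL (ins_rb n i t) n = Some (f k)"
  shows "embedding (ins_rb n i t) P e (f(k := n))"
proof -
  let ?T = "ins_rb n i t"
  obtain c' where c': "cL P k = Some c'" "\<not> e c'" using friendly_last_rbranch(3)[OF F k] by blast
  have inj: "inj_on f (set_tree P)" and im: "f ` set_tree P \<subseteq> set_tree t"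
    using f by (auto simp: embedding_def)
  have below_n: "set_tree (Lsub t (f k)) \<subseteq> set_tree (Lsub ?T n)"
    using cL_ins_rb_new[OF i n d a(3)] by blast
  note edges = embedding_ins_rb_edges[OF f i n d]
  show ?thesis unfolding embedding_def
  proof (intro conjI allI impI)
    show "inj_on (f(k := n)) (set_tree P)" by (rule inj_on_fun_updI[OF inj]) (use im n in blast)
    show "f(k := n) ` set_tree P \<subseteq> set_tree ?T" using im by auto
  next
    fix p j assume pj: "cL P p = Some j"
    have "j \<noteq> k" using friendly_last_rbranch(2)[OF F k(1), of p] pj by auto
    show "if e j then cL ?T ((f(k := n)) p) = Some ((f(k := n)) j)
      else (f(k := n)) j \<in> set_tree (Lsub ?T ((f(k := n)) p))"
    proof (cases "p = k")
      case True
      then have "j = c'" using pj c'(1) by simp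
      then show ?thesis using True c'(2) \<open>j \<noteq> k\<close> embedding_cL[OF f c'(1)] below_n by auto
    next
      case False
      then show ?thesis using edges(1)[OF pj] \<open>j \<noteq> k\<close> by simp
    qed
  next
    fix p j assume pj: "cR P p = Some j"
    have "p \<noteq> k" using friendly_last_rbranch(1)[OF F k(1)] pj by auto
    show "if e j then cR ?T ((f(k := n)) p) = Some ((f(k := n)) j)
      else (f(k := n)) j \<in> set_tree (Rsub ?T ((f(k := n)) p))"
    proof (cases "j = k")
      case True
      then have "p = a" using cR_inj[OF distinct_tree_if_friendly[OF F] pj[unfolded True] a(1)] by simp
      then show ?thesis using True a(2) k(2) \<open>p \<noteq> k\<close> by simp
    next
      case False
      have "f j \<noteq> f k" using inj_onD[OF inj] cR_SomeD[OF pj] cL_SomeD[OF c'(1)] False by blast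
      then have "cR ?T (f p) = Some (f j)" if "e j" using edges(3)[OF pj that] a(3) by auto
      then show ?thesis using edges(2)[OF pj] False \<open>p \<noteq> k\<close> by auto
    qed
  qed
qed

text \<open>The insertion of \<open>n\<close> can only break a tight right edge \<open>(a, c)\<close> of an embedding, by
  putting \<open>n\<close> between the images of \<open>a\<close> and \<open>c\<close>.  For a friendly pattern \<open>c\<close> must then be the
  largest vertex, and sending it to \<open>n\<close> instead repairs the embedding: its left child is joined to it
  by a loose edge and its image is still below \<open>n\<close>.\<close>

lemma contains_ins_rb:
  assumes F: "friendly (P, e)" and "contains t (P, e)"
    and i: "i \<le> rb_length t" and n: "n \<notin> set_tree t" and d: "distinct_tree t"
  shows "contains (ins_rb n i t) (P, e)"
proof -
  let ?T = "ins_rb n i t"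
  obtain f where f: "embedding t P e f" using assms(2) by (auto simp: contains_iff_embedding)
  show ?thesis
  proof (cases "\<exists>a c. cR P a = Some c \<and> e c \<and> cR ?T (f a) \<noteq> Some (f c)")
    case False
    then have "embedding ?T P e f" using embedding_ins_rb[OF f i n d] by blast
    then show ?thesis by (auto simp: contains_iff_embedding)
  next
    case True
    then obtain a c where ac: "cR P a = Some c" "e c"
      and broken: "cR ?T (f a) = Some n" "cL ?T n = Some (f c)"
      using embedding_ins_rb_edges(3)[OF f i n d] by blast
    have "f c \<in> set (rbranch t)" using cL_ins_rb_new[OF i n d broken(2)] by blast
    then have "c = last (rbranch P)" by (rule friendly_tight_right_child_in_rbranch[OF F f d ac])
    then have "embedding ?T P e (f(c := n))"
      using embedding_ins_rb_redirect[OF F f i n d _ ac(2) ac(1) broken] by blast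
    then show ?thesis by (auto simp: contains_iff_embedding)
  qed
qed

section \<open>Rotations and slides\<close>

lemma inorder_rot_up: "rot_up j t = Some t' \<Longrightarrow> inorder t' = inorder t"
proof (induction t arbitrary: t')
  case (Node l x r)
  show ?case
  proof (cases "x = j \<or> j \<in> set_tree l")
    case True
    then show ?thesis using Node by (auto split: if_splits)
  next
    case False
    then show ?thesis using Node by (cases r) (auto split: if_splits)
  qed
qed simp

lemma inorder_rot_down: "rot_down j t = Some t' \<Longrightarrow> inorder t' = inorder t"
  by (induction j t arbitrary: t' rule: rot_down.induct) (auto split: if_splits tree.splits)

lemma inorder_slide: "slide up j d t = Some t' \<Longrightarrow> inorder t' = inorder t"
  by (induction up j d t rule: slide.induct)
    (auto simp: rot_def dest: inorder_rot_up inorder_rot_down split: option.splits if_splits)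

lemma rot_up_notin: "j \<notin> set_tree t \<Longrightarrow> rot_up j t = None"
proof (induction t)
  case (Node l x r)
  then show ?case by (cases r) auto
qed simp

lemma rot_down_notin: "j \<notin> set_tree t \<Longrightarrow> rot_down j t = None"
  by (induction t) auto

lemma slide_notin: "j \<notin> set_tree t \<Longrightarrow> 1 \<le> d \<Longrightarrow> slide up j d t = None"
  by (cases d) (simp_all add: rot_def rot_up_notin rot_down_notin)

lemma slide_commute:
  assumes "\<And>s. rot up j (E s) = map_option E (rot up j s)"
  shows "slide up j d (E t) = map_option E (slide up j d t)"
proof (induction d arbitrary: t)
  case (Suc d)
  then show ?case using assms[of t] by (cases "rot up j t") auto
qed simp

lemma rot_ins_rb_root: "j \<noteq> n \<Longrightarrow> rot up j (ins_rb n 0 s) = map_option (ins_rb n 0) (rot up j s)"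
  by (cases "j \<in> set_tree s"; cases "rot_up j s"; cases "rot_down j s")
    (simp_all add: rot_def rot_up_notin rot_down_notin)

lemma rot_ins_rb_bottom:
  assumes "j \<noteq> n"
  shows "rot up j (ins_rb n (rb_length s) s) = map_option (\<lambda>s. ins_rb n (rb_length s) s) (rot up j s)"
proof -
  have "rot_up j (ins_rb n (rb_length s) s) = map_option (\<lambda>s. ins_rb n (rb_length s) s) (rot_up j s)"
  proof (induction s)
    case (Node l x r)
    with assms show ?case
      by (cases r; cases "rot_up j l"; cases "rot_up j r") auto
  qed (use assms in simp)
  moreover have "rot_down j (ins_rb n (rb_length s) s) = map_option (\<lambda>s. ins_rb n (rb_length s) s) (rot_down j s)"
  proof (induction s)
    case (Node l x r)
    then show ?case
      by (cases l; cases "rot_down j l"; cases "rot_down j r") auto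
  qed simp
  ultimately show ?thesis by (simp add: rot_def)
qed

lemma rot_up_ins_rb_Suc:
  "n \<notin> set_tree t \<Longrightarrow> i < rb_length t \<Longrightarrow> rot_up n (ins_rb n (Suc i) t) = Some (ins_rb n i t)"
proof (induction i arbitrary: t)
  case 0
  then show ?case by (cases t) auto
next
  case (Suc i)
  then obtain l x r where t: "t = Node l x r" by (cases t) auto
  with Suc.prems obtain a b c where r: "r = Node a b c" by (cases r) auto
  have "rot_up n (ins_rb n (Suc i) r) = Some (ins_rb n i r)" using Suc t by auto
  then show ?case using Suc.prems t r by auto
qed

lemma rot_down_ins_rb:
  "n \<notin> set_tree t \<Longrightarrow> i < rb_length t \<Longrightarrow> rot_down n (ins_rb n i t) = Some (ins_rb n (Suc i) t)"
proof (induction i arbitrary: t)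
  case 0
  then show ?case by (cases t) auto
next
  case (Suc i)
  then show ?case by (cases t) auto
qed

lemma rot_down_ins_rb_bottom: "n \<notin> set_tree t \<Longrightarrow> rot_down n (ins_rb n (rb_length t) t) = None"
  by (induction t) auto

lemma slide_up_ins_rb:
  "n \<notin> set_tree t \<Longrightarrow> i \<le> rb_length t \<Longrightarrow>
   slide True n d (ins_rb n i t) = (if d \<le> i then Some (ins_rb n (i - d) t) else None)"
proof (induction d arbitrary: i)
  case (Suc d)
  then show ?case
    by (cases i) (auto simp: rot_def rot_up_ins_rb_Suc)
qed simp

lemma slide_down_ins_rb:
  "n \<notin> set_tree t \<Longrightarrow> i \<le> rb_length t \<Longrightarrow>
   slide False n d (ins_rb n i t) = (if i + d \<le> rb_length t then Some (ins_rb n (i + d) t) else None)"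
proof (induction d arbitrary: i)
  case (Suc d)
  show ?case
  proof (cases "i = rb_length t")
    case True
    then show ?thesis using rot_down_ins_rb_bottom Suc.prems by (simp add: rot_def)
  next
    case False
    then show ?thesis using Suc rot_down_ins_rb[of n t i] by (simp add: rot_def)
  qed
qed simp

lemma in_set_take_if_sorted_wrt:
  assumes "sorted_wrt R xs" "\<And>x y. R x y \<Longrightarrow> \<not> R y x"
    and "j < length xs" "x \<in> set xs" "R x (xs ! j)"
  shows "x \<in> set (take j xs)"
proof -
  obtain i where i: "i < length xs" "xs ! i = x" using assms(4) by (metis in_set_conv_nth)
  have "\<not> j \<le> i"
    using sorted_wrt_nth_less[OF assms(1), of j i] assms(2,3,5) i by (cases "i = j") auto
  then show ?thesis using i by (metis in_set_conv_nth length_take min_less_iff_conj not_le nth_take)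
qed

lemma sorted_wrt_no_between:
  assumes "sorted_wrt R xs" "\<And>x y. R x y \<Longrightarrow> \<not> R y x"
    and "Suc j < length xs" "x \<in> set xs" "R (xs ! j) x" "R x (xs ! Suc j)"
  shows False
proof -
  obtain i where i: "i < length xs" "xs ! i = x" using assms(4) by (metis in_set_conv_nth)
  have "\<not> i \<le> j"
    using sorted_wrt_nth_less[OF assms(1), of i j] assms(2,3,5) i by (cases "i = j") auto
  moreover have "\<not> Suc j \<le> i"
    using sorted_wrt_nth_less[OF assms(1), of "Suc j" i] assms(2,3,6) i by (cases "i = Suc j") auto
  ultimately show False by simp
qed

lemma nth_notin_set_take: "distinct xs \<Longrightarrow> j < length xs \<Longrightarrow> xs ! j \<notin> set (take j xs)"
  by (metis distinct_append id_take_nth_drop disjoint_iff list.set_intros(1) set_append)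

text \<open>Sliding \<open>n\<close> up decreases its depth on the right branch, sliding it down increases it.\<close>

definition precedes :: "bool \<Rightarrow> nat \<Rightarrow> nat \<Rightarrow> bool" where
  "precedes up p q \<longleftrightarrow> (if up then q < p else p < q)"

lemma precedes_asym: "precedes up p q \<Longrightarrow> \<not> precedes up q p"
  by (auto simp: precedes_def split: if_splits)

lemma precedes_Not: "precedes (\<not> up) p q \<longleftrightarrow> precedes up q p"
  by (auto simp: precedes_def)

lemma minimal_slide_ins_rbD:
  assumes n: "n \<notin> set_tree t" and p: "p \<le> rb_length t" and m: "minimal_slide L up n (ins_rb n p t) T'"
  shows "\<exists>p'. p' \<le> rb_length t \<and> T' = ins_rb n p' t \<and> T' \<in> L \<and> precedes up p p'"
proof -
  obtain d where d: "d \<ge> 1" "slide up n d (ins_rb n p t) = Some T'" "T' \<in> L"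
    using m by (auto simp: minimal_slide_def)
  show ?thesis
  proof (cases up)
    case True
    with d slide_up_ins_rb[OF n p, of d] have "d \<le> p" "T' = ins_rb n (p - d) t" by (auto split: if_splits)
    then show ?thesis using d True p by (intro exI[of _ "p - d"]) (auto simp: precedes_def)
  next
    case False
    with d slide_down_ins_rb[OF n p, of d] have "p + d \<le> rb_length t" "T' = ins_rb n (p + d) t"
      by (auto split: if_splits)
    then show ?thesis using d False by (intro exI[of _ "p + d"]) (auto simp: precedes_def)
  qed
qed

lemma minimal_slide_ins_rbI:
  assumes n: "n \<notin> set_tree t" and p: "p \<le> rb_length t" and p': "p' \<le> rb_length t"
    and L: "ins_rb n p' t \<in> L" and pp': "precedes up p p'"
    and nearest: "\<And>q. q \<le> rb_length t \<Longrightarrow> precedes up p q \<Longrightarrow> precedes up q p' \<Longrightarrow> ins_rb n q t \<notin> L"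
  shows "minimal_slide L up n (ins_rb n p t) (ins_rb n p' t)"
proof (cases up)
  case True
  then have "p' < p" using pp' by (simp add: precedes_def)
  show ?thesis unfolding minimal_slide_def
  proof (intro exI[of _ "p - p'"] conjI allI impI)
    show "1 \<le> p - p'" using \<open>p' < p\<close> by simp
    show "slide up n (p - p') (ins_rb n p t) = Some (ins_rb n p' t)"
      using slide_up_ins_rb[OF n p] True \<open>p' < p\<close> by simp
  next
    fix d' s assume "1 \<le> d' \<and> d' < p - p'" "slide up n d' (ins_rb n p t) = Some s"
    then show "s \<notin> L"
      using slide_up_ins_rb[OF n p] True nearest[of "p - d'"] p by (auto simp: precedes_def split: if_splits)
  qed (use L in simp)
next
  case False
  then have "p < p'" using pp' by (simp add: precedes_def)
  show ?thesis unfolding minimal_slide_def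
  proof (intro exI[of _ "p' - p"] conjI allI impI)
    show "1 \<le> p' - p" using \<open>p < p'\<close> by simp
    show "slide up n (p' - p) (ins_rb n p t) = Some (ins_rb n p' t)"
      using slide_down_ins_rb[OF n p] False \<open>p < p'\<close> p' by simp
  next
    fix d' s assume "1 \<le> d' \<and> d' < p' - p" "slide up n d' (ins_rb n p t) = Some s"
    then show "s \<notin> L"
      using slide_down_ins_rb[OF n p] False nearest[of "p + d'"] p' by (auto simp: precedes_def split: if_splits)
  qed (use L in simp)
qed

lemma S_good_in_last: "S_good L V j \<Longrightarrow> j \<in> set_tree (last V)"
proof (rule ccontr)
  assume "S_good L V j" "j \<notin> set_tree (last V)"
  then obtain up d T' where "d \<ge> 1" "slide up j d (last V) = Some T'"
    by (auto simp: S_good_def S_cand_def minimal_slide_def)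
  then show False using slide_notin[OF \<open>j \<notin> _\<close>] by simp
qed

lemma S_largest_if_max: "S_good L V j \<Longrightarrow> \<forall>v \<in> set_tree (last V). v \<le> j \<Longrightarrow> S_largest L V j"
  using S_good_in_last by (auto simp: S_largest_def)

lemma S_stop_if_all_visited: "set V = L \<Longrightarrow> S_stop L V"
  by (auto simp: S_stop_def S_good_def S_cand_def minimal_slide_def)

section \<open>The zigzag list\<close>

text \<open>\<open>zigzag L n True ts\<close> is what Algorithm S visits on \<open>L\<close> if it visits \<open>ts\<close> on the trees without
  the vertex \<open>n\<close>: for each tree of \<open>ts\<close> in turn, \<open>n\<close> slides along its right branch through all depths
  admitted by \<open>L\<close>, alternately upwards (from the bottom) and downwards (from the root).\<close>

definition rb_depths :: "nat tree set \<Rightarrow> nat \<Rightarrow> bool \<Rightarrow> nat tree \<Rightarrow> nat list" where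
  "rb_depths L n up t =
     (if up then rev else id) (filter (\<lambda>i. ins_rb n i t \<in> L) [0..<Suc (rb_length t)])"

definition block :: "nat tree set \<Rightarrow> nat \<Rightarrow> bool \<Rightarrow> nat tree \<Rightarrow> nat tree list" where
  "block L n up t = map (\<lambda>i. ins_rb n i t) (rb_depths L n up t)"

fun zigzag :: "nat tree set \<Rightarrow> nat \<Rightarrow> bool \<Rightarrow> nat tree list \<Rightarrow> nat tree list" where
  "zigzag L n up [] = []"
| "zigzag L n up (t # ts) = block L n up t @ zigzag L n (\<not> up) ts"

lemma set_rb_depths: "set (rb_depths L n up t) = {i. i \<le> rb_length t \<and> ins_rb n i t \<in> L}"
  by (auto simp: rb_depths_def simp del: upt_Suc)

lemma distinct_rb_depths: "distinct (rb_depths L n up t)"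
  by (simp add: rb_depths_def)

lemma sorted_wrt_precedes_rb_depths: "sorted_wrt (precedes up) (rb_depths L n up t)"
proof -
  have "sorted_wrt (<) (filter (\<lambda>i. ins_rb n i t \<in> L) [0..<Suc (rb_length t)])"
    by (rule sorted_wrt_filter, rule sorted_wrt_upt)
  moreover have "precedes up = (if up then (\<lambda>p q. q < p) else (<))"
    by (auto simp: precedes_def fun_eq_iff)
  ultimately show ?thesis by (simp add: rb_depths_def sorted_wrt_rev del: upt_Suc)
qed

lemma rb_depths_ends:
  assumes "ins_rb n 0 t \<in> L" "ins_rb n (rb_length t) t \<in> L"
  shows "rb_depths L n up t \<noteq> []"
    and "hd (rb_depths L n up t) = (if up then rb_length t else 0)"
    and "last (rb_depths L n up t) = (if up then 0 else rb_length t)"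
proof -
  let ?ds = "filter (\<lambda>i. ins_rb n i t \<in> L) [0..<Suc (rb_length t)]"
  have "?ds = 0 # filter (\<lambda>i. ins_rb n i t \<in> L) [Suc 0..<Suc (rb_length t)]"
    using assms(1) by (simp add: upt_conv_Cons del: upt_Suc)
  moreover have "?ds = filter (\<lambda>i. ins_rb n i t \<in> L) [0..<rb_length t] @ [rb_length t]"
    using assms(2) by simp
  ultimately have "?ds \<noteq> []" "hd ?ds = 0" "last ?ds = rb_length t" by (metis list.sel(1) list.distinct(1),
      metis list.sel(1), metis last_snoc)
  then show "rb_depths L n up t \<noteq> []" "hd (rb_depths L n up t) = (if up then rb_length t else 0)"
    "last (rb_depths L n up t) = (if up then 0 else rb_length t)"
    by (simp_all add: rb_depths_def hd_rev last_rev del: upt_Suc)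
qed

lemma set_block: "set (block L n up t) = {ins_rb n i t | i. i \<le> rb_length t \<and> ins_rb n i t \<in> L}"
  by (auto simp: block_def set_rb_depths)

lemma distinct_block: "distinct (block L n up t)"
  unfolding block_def distinct_map
  using distinct_rb_depths by (auto simp: set_rb_depths inj_on_def dest: ins_rb_inj)

lemma block_ends:
  assumes "ins_rb n 0 t \<in> L" "ins_rb n (rb_length t) t \<in> L"
  shows "block L n up t \<noteq> []"
    and "hd (block L n up t) = ins_rb n (if up then rb_length t else 0) t"
    and "last (block L n up t) = ins_rb n (if up then 0 else rb_length t) t"
  using rb_depths_ends[OF assms, of up] by (simp_all add: block_def hd_map last_map)

lemma set_zigzag:
  "set (zigzag L n up ts) = {ins_rb n i t | t i. t \<in> set ts \<and> i \<le> rb_length t \<and> ins_rb n i t \<in> L}"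
  by (induction ts arbitrary: up) (auto simp: set_block)

lemma zigzag_append:
  "zigzag L n up (ts @ us) = zigzag L n up ts @ zigzag L n (if even (length ts) then up else \<not> up) us"
  by (induction ts arbitrary: up) auto

lemma distinct_zigzag: "distinct ts \<Longrightarrow> distinct (zigzag L n up ts)"
proof (induction ts arbitrary: up)
  case (Cons t ts)
  have "set (block L n up t) \<inter> set (zigzag L n (\<not> up) ts) = {}"
    using Cons.prems by (auto simp: set_block set_zigzag dest: ins_rb_inj)
  then show ?case using Cons distinct_block by simp
qed simp

lemma minimal_slide_within_block:
  assumes n: "n \<notin> set_tree t" and j: "0 < j" "j < length (rb_depths L n up t)"
  shows "minimal_slide L up n (ins_rb n (rb_depths L n up t ! (j - 1)) t) (ins_rb n (rb_depths L n up t ! j) t)"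
proof -
  let ?ds = "rb_depths L n up t"
  have sorted: "sorted_wrt (precedes up) ?ds" by (rule sorted_wrt_precedes_rb_depths)
  have "?ds ! (j - 1) \<in> set ?ds" "?ds ! j \<in> set ?ds" using j by auto
  then have "?ds ! (j - 1) \<le> rb_length t" "?ds ! j \<le> rb_length t" "ins_rb n (?ds ! j) t \<in> L"
    by (auto simp: set_rb_depths)
  then show ?thesis
  proof (rule minimal_slide_ins_rbI[OF n])
    show "precedes up (?ds ! (j - 1)) (?ds ! j)" using sorted_wrt_nth_less[OF sorted, of "j - 1" j] j by simp
    show "ins_rb n q t \<notin> L"
      if "q \<le> rb_length t" "precedes up (?ds ! (j - 1)) q" "precedes up q (?ds ! j)" for q
      using sorted_wrt_no_between[OF sorted precedes_asym, of "j - 1" q] that j by (auto simp: set_rb_depths)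
  qed
qed

lemma minimal_slide_back_within_block:
  assumes n: "n \<notin> set_tree t" and j: "0 < j" "j < length (rb_depths L n up t)"
    and T: "minimal_slide L (\<not> up) n (ins_rb n (rb_depths L n up t ! (j - 1)) t) T"
  shows "T \<in> set (take (j - 1) (block L n up t))"
proof -
  let ?ds = "rb_depths L n up t"
  have "?ds ! (j - 1) \<le> rb_length t" using j nth_mem[of "j - 1" ?ds] by (auto simp: set_rb_depths)
  then obtain p where p: "p \<le> rb_length t" "T = ins_rb n p t" "T \<in> L" "precedes up p (?ds ! (j - 1))"
    using minimal_slide_ins_rbD[OF n _ T] precedes_Not by blast
  then have "p \<in> set (take (j - 1) ?ds)"
    using in_set_take_if_sorted_wrt[OF sorted_wrt_precedes_rb_depths[of up L n t] precedes_asym, of "j - 1"] j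
    by (simp add: set_rb_depths)
  then show ?thesis using p(2) by (auto simp: block_def take_map)
qed

lemma S_step_within_block:
  assumes n: "\<forall>v \<in> set_tree t. v < n"
    and V0: "\<forall>T \<in> set V0. \<forall>i \<le> rb_length t. T \<noteq> ins_rb n i t"
    and j: "0 < j" "j < length (block L n up t)"
  shows "S_step L (V0 @ take j (block L n up t)) (block L n up t ! j)"
proof -
  let ?ds = "rb_depths L n up t" and ?W = "block L n up t"
  let ?V = "V0 @ take j ?W"
  have nt: "n \<notin> set_tree t" using n by blast
  have jd: "j < length ?ds" using j(2) by (simp add: block_def)
  have "take j ?W = take (j - 1) ?W @ [?W ! (j - 1)]"
    using take_Suc_conv_app_nth[of "j - 1" ?W] j by simp
  then have last_V: "last ?V = ins_rb n (?ds ! (j - 1)) t" using jd by (simp add: block_def)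
  have next_W: "?W ! j = ins_rb n (?ds ! j) t" using jd by (simp add: block_def)
  have unvisited: "?W ! j \<notin> set ?V"
  proof
    assume "?W ! j \<in> set ?V"
    moreover have "?ds ! j \<le> rb_length t" using jd nth_mem[of j ?ds] by (auto simp: set_rb_depths)
    ultimately have "?W ! j \<in> set (take j ?W)" using V0 next_W by auto
    then show False using nth_notin_set_take[OF distinct_block j(2)] by simp
  qed
  have cand: "S_cand L ?V n up (?W ! j)"
    using minimal_slide_within_block[OF nt j(1) jd] last_V next_W unvisited by (simp add: S_cand_def)
  have no_way_back: "\<not> S_cand L ?V n (\<not> up) T" for T
    using minimal_slide_back_within_block[OF nt j(1) jd, of T] last_V
      set_take_subset_set_take[of "j - 1" j ?W]
    by (auto simp: S_cand_def)
  have "S_largest L ?V n"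
    using S_largest_if_max[of L ?V n] cand n last_V by (force simp: S_good_def)
  then show ?thesis using cand no_way_back by (auto simp: S_step_def)
qed

lemma set_tree_Tn: "t \<in> Tn n \<Longrightarrow> set_tree t = {1..n}"
  by (simp add: Tn_def flip: set_inorder) auto

lemma slide_in_Tn: "s \<in> Tn n \<Longrightarrow> slide up j d s = Some s' \<Longrightarrow> s' \<in> Tn n"
  using inorder_slide by (simp add: Tn_def)

text \<open>While \<open>n\<close> sits at a fixed end (root or bottom) of the right branch, every rotation of a smaller
  vertex commutes with the insertion \<open>E\<close> of \<open>n\<close>, so Algorithm S on \<open>L\<close> simulates Algorithm S on \<open>L'\<close>.\<close>

locale commuting_insertion =
  fixes n' :: nat and L L' :: "nat tree set" and E :: "nat tree \<Rightarrow> nat tree"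
  assumes L'_Tn: "L' \<subseteq> Tn n'"
    and E_rot: "\<And>s j up. j \<noteq> Suc n' \<Longrightarrow> rot up j (E s) = map_option E (rot up j s)"
    and E_L: "\<And>s. s \<in> Tn n' \<Longrightarrow> E s \<in> L \<longleftrightarrow> s \<in> L'"
    and E_ins_rb: "\<And>s. \<exists>i \<le> rb_length s. E s = ins_rb (Suc n') i s"
begin

lemma minimal_slide_lift:
  assumes j: "j \<noteq> Suc n'" and s: "s \<in> Tn n'"
  shows "minimal_slide L up j (E s) T \<longleftrightarrow> (\<exists>s'. T = E s' \<and> minimal_slide L' up j s s')"
proof -
  have slide_E: "slide up j d (E s) = map_option E (slide up j d s)" for d
    by (rule slide_commute) (rule E_rot[OF j])
  have L_iff: "slide up j d s = Some s' \<Longrightarrow> E s' \<in> L \<longleftrightarrow> s' \<in> L'" for d s'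
    using E_L slide_in_Tn[OF s] by blast
  show ?thesis
  proof
    assume "minimal_slide L up j (E s) T"
    then obtain d where d: "d \<ge> 1" "slide up j d (E s) = Some T" "T \<in> L"
      and shorter: "\<forall>d'. 1 \<le> d' \<and> d' < d \<longrightarrow> (\<forall>t. slide up j d' (E s) = Some t \<longrightarrow> t \<notin> L)"
      by (auto simp: minimal_slide_def)
    obtain s' where s': "slide up j d s = Some s'" "T = E s'"
      using d(2) slide_E by (cases "slide up j d s") auto
    have "\<forall>d'. 1 \<le> d' \<and> d' < d \<longrightarrow> (\<forall>t. slide up j d' s = Some t \<longrightarrow> t \<notin> L')"
      using shorter slide_E L_iff by fastforce
    then show "\<exists>s'. T = E s' \<and> minimal_slide L' up j s s'"
      using d s' L_iff by (auto simp: minimal_slide_def)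
  next
    assume "\<exists>s'. T = E s' \<and> minimal_slide L' up j s s'"
    then obtain s' d where d: "T = E s'" "d \<ge> 1" "slide up j d s = Some s'" "s' \<in> L'"
      and shorter: "\<forall>d'. 1 \<le> d' \<and> d' < d \<longrightarrow> (\<forall>t. slide up j d' s = Some t \<longrightarrow> t \<notin> L')"
      by (auto simp: minimal_slide_def)
    have "\<forall>d'. 1 \<le> d' \<and> d' < d \<longrightarrow> (\<forall>t. slide up j d' (E s) = Some t \<longrightarrow> t \<notin> L)"
      using shorter slide_E L_iff by fastforce
    then show "minimal_slide L up j (E s) T"
      using d slide_E L_iff by (auto simp: minimal_slide_def)
  qed
qed

end

locale lifted_visit = commuting_insertion +
  fixes Vs V :: "nat tree list"
  assumes Vs: "Vs \<noteq> []" "set Vs \<subseteq> L'"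
    and set_V: "set V = {ins_rb (Suc n') i t | t i. t \<in> set Vs \<and> i \<le> rb_length t \<and> ins_rb (Suc n') i t \<in> L}"
    and last_V: "last V = E (last Vs)"
begin

lemma last_Vs_Tn: "last Vs \<in> Tn n'"
  using last_in_set[OF Vs(1)] Vs(2) L'_Tn by blast

lemma new_vertex_notin_last_Vs: "Suc n' \<notin> set_tree (last Vs)"
  using set_tree_Tn[OF last_Vs_Tn] by simp

lemma E_in_set_V:
  assumes "s \<in> L'"
  shows "E s \<in> set V \<longleftrightarrow> s \<in> set Vs"
proof -
  obtain i where i: "i \<le> rb_length s" "E s = ins_rb (Suc n') i s" using E_ins_rb by blast
  have "E s \<in> L" using E_L assms L'_Tn by blast
  then show ?thesis using set_V i by (auto dest: ins_rb_inj)
qed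

lemma not_S_cand_new_vertex: "\<not> S_cand L V (Suc n') up T"
proof
  assume "S_cand L V (Suc n') up T"
  then have T: "minimal_slide L up (Suc n') (E (last Vs)) T" "T \<notin> set V"
    using last_V by (auto simp: S_cand_def)
  obtain i where i: "i \<le> rb_length (last Vs)" "E (last Vs) = ins_rb (Suc n') i (last Vs)"
    using E_ins_rb by blast
  obtain p' where "p' \<le> rb_length (last Vs)" "T = ins_rb (Suc n') p' (last Vs)" "T \<in> L"
    using minimal_slide_ins_rbD[OF new_vertex_notin_last_Vs i(1)] T(1) i(2) by metis
  then have "T \<in> set V" using set_V last_in_set[OF Vs(1)] by blast
  then show False using T(2) by simp
qed

lemma S_cand_lift:
  assumes "j \<noteq> Suc n'"
  shows "S_cand L V j up T \<longleftrightarrow> (\<exists>t. T = E t \<and> S_cand L' Vs j up t)"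
proof -
  have "\<And>t. minimal_slide L' up j (last Vs) t \<Longrightarrow> t \<in> L'" by (auto simp: minimal_slide_def)
  then show ?thesis
    using minimal_slide_lift[OF assms last_Vs_Tn] last_V E_in_set_V by (auto simp: S_cand_def)
qed

lemma S_good_lift: "S_good L V j \<longleftrightarrow> S_good L' Vs j"
proof (cases "j = Suc n'")
  case True
  then have "\<not> S_good L' Vs j" using S_good_in_last new_vertex_notin_last_Vs by blast
  then show ?thesis using True not_S_cand_new_vertex by (auto simp: S_good_def)
next
  case False
  then show ?thesis using S_cand_lift by (auto simp: S_good_def)
qed

lemma S_step_lift:
  assumes "S_step L' Vs t"
  shows "S_step L V (E t)"
proof -
  obtain j up where j: "S_largest L' Vs j" "S_cand L' Vs j up t" "\<not> (\<exists>T. S_cand L' Vs j (\<not> up) T)"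
    using assms by (auto simp: S_step_def)
  have "j \<noteq> Suc n'" using j(1) S_good_in_last new_vertex_notin_last_Vs by (auto simp: S_largest_def)
  have "S_largest L V j" using j(1) S_good_lift by (simp add: S_largest_def)
  moreover have "S_cand L V j up (E t)" using S_cand_lift[OF \<open>j \<noteq> Suc n'\<close>] j(2) by blast
  moreover have "\<not> (\<exists>T. S_cand L V j (\<not> up) T)" using S_cand_lift[OF \<open>j \<noteq> Suc n'\<close>] j(3) by blast
  ultimately show ?thesis by (auto simp: S_step_def)
qed

end

section \<open>The induction on the number of vertices\<close>

lemma avoiding_subset_Tn: "avoiding n pats \<subseteq> Tn n"
  by (auto simp: avoiding_def)

lemma ins_rb_in_Tn: "t \<in> Tn n \<Longrightarrow> i \<le> rb_length t \<Longrightarrow> ins_rb (Suc n) i t \<in> Tn (Suc n)"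
  by (simp add: Tn_def inorder_ins_rb)

lemma Tn_Suc_cases: "T \<in> Tn (Suc n) \<Longrightarrow> \<exists>t i. t \<in> Tn n \<and> i \<le> rb_length t \<and> T = ins_rb (Suc n) i t"
  using ins_rb_cases[of T "[1..<Suc n]" "Suc n"] by (auto simp: Tn_def)

lemma ins_rb_in_avoidingD:
  assumes "\<forall>pe \<in> set pats. friendly pe" "t \<in> Tn n" "i \<le> rb_length t"
    and "ins_rb (Suc n) i t \<in> avoiding (Suc n) pats"
  shows "t \<in> avoiding n pats"
proof -
  have d: "distinct_tree t" "Suc n \<notin> set_tree t" using assms(2) set_tree_Tn[of t n] by (auto simp: Tn_def)
  have "\<not> contains t (P, e)" if "(P, e) \<in> set pats" for P e
    using contains_ins_rb[OF _ _ assms(3) d(2,1)] assms(1,4) that by (auto simp: avoiding_def)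
  then show ?thesis using assms(2) by (auto simp: avoiding_def)
qed

lemma ins_rb_end_in_avoiding_iff:
  assumes "\<forall>pe \<in> set pats. friendly pe" "t \<in> Tn n"
  shows "ins_rb (Suc n) (if bottom then rb_length t else 0) t \<in> avoiding (Suc n) pats \<longleftrightarrow>
    t \<in> avoiding n pats"
proof
  assume "ins_rb (Suc n) (if bottom then rb_length t else 0) t \<in> avoiding (Suc n) pats"
  then show "t \<in> avoiding n pats"
    using ins_rb_in_avoidingD[OF assms, of "if bottom then rb_length t else 0"] by simp
next
  assume t: "t \<in> avoiding n pats"
  have d: "distinct_tree t" "Suc n \<notin> set_tree t" using assms(2) set_tree_Tn[of t n] by (auto simp: Tn_def)
  have "\<not> contains (ins_rb (Suc n) (if bottom then rb_length t else 0) t) (P, e)"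
    if pe: "(P, e) \<in> set pats" for P e
  proof
    assume "contains (ins_rb (Suc n) (if bottom then rb_length t else 0) t) (P, e)"
    then have "contains t (P, e)"
      using contains_ins_rb_rootD[OF _ _ d] contains_ins_rb_bottomD[OF _ _ d] assms(1) pe
      by (cases bottom) auto
    then show False using t pe by (auto simp: avoiding_def)
  qed
  then show "ins_rb (Suc n) (if bottom then rb_length t else 0) t \<in> avoiding (Suc n) pats"
    using ins_rb_in_Tn[OF assms(2), of "if bottom then rb_length t else 0"] by (auto simp: avoiding_def)
qed

lemma commuting_insertion_avoiding:
  assumes "\<forall>pe \<in> set pats. friendly pe"
  shows "commuting_insertion n' (avoiding (Suc n') pats) (avoiding n' pats)
    (\<lambda>s. ins_rb (Suc n') (if bottom then rb_length s else 0) s)"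
proof
  show "avoiding n' pats \<subseteq> Tn n'" by (rule avoiding_subset_Tn)
  show "s \<in> Tn n' \<Longrightarrow> ins_rb (Suc n') (if bottom then rb_length s else 0) s \<in> avoiding (Suc n') pats
      \<longleftrightarrow> s \<in> avoiding n' pats" for s
    by (rule ins_rb_end_in_avoiding_iff[OF assms])
  show "\<exists>i \<le> rb_length s. ins_rb (Suc n') (if bottom then rb_length s else 0) s = ins_rb (Suc n') i s" for s
    by auto
  show "rot up j (ins_rb (Suc n') (if bottom then rb_length s else 0) s) =
      map_option (\<lambda>s. ins_rb (Suc n') (if bottom then rb_length s else 0) s) (rot up j s)"
    if "j \<noteq> Suc n'" for s j up
    using rot_ins_rb_bottom[OF that] rot_ins_rb_root[OF that] by (cases bottom; cases "rot up j s") simp_all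
qed

definition S_steps :: "nat tree set \<Rightarrow> nat tree list \<Rightarrow> bool" where
  "S_steps L xs \<longleftrightarrow> (\<forall>i. Suc i < length xs \<longrightarrow> S_step L (take (Suc i) xs) (xs ! Suc i))"

lemma S_run_iff: "S_run L T0 xs \<longleftrightarrow> xs \<noteq> [] \<and> hd xs = T0 \<and> S_steps L xs \<and> S_stop L xs"
  by (simp add: S_run_def S_steps_def)

lemma S_steps_append:
  assumes "S_steps L V" "V \<noteq> [] \<Longrightarrow> S_step L V (hd W)"
    and "\<And>j. 0 < j \<Longrightarrow> j < length W \<Longrightarrow> S_step L (V @ take j W) (W ! j)"
  shows "S_steps L (V @ W)"
  unfolding S_steps_def
proof (intro allI impI)
  fix i assume i: "Suc i < length (V @ W)"
  consider "Suc i < length V" | "Suc i = length V" | "length V < Suc i" by linarith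
  then show "S_step L (take (Suc i) (V @ W)) ((V @ W) ! Suc i)"
  proof cases
    case 1
    then show ?thesis using assms(1) by (simp add: S_steps_def nth_append)
  next
    case 2
    then have "V \<noteq> []" "W \<noteq> []" using i by auto
    then show ?thesis using assms(2) 2 by (simp add: nth_append hd_conv_nth)
  next
    case 3
    then have "0 < Suc i - length V" "Suc i - length V < length W" using i by auto
    then show ?thesis using assms(3) 3 by (simp add: nth_append)
  qed
qed

lemma set_zigzag_avoiding:
  assumes "\<forall>pe \<in> set pats. friendly pe" "set ts = avoiding n pats"
  shows "set (zigzag (avoiding (Suc n) pats) (Suc n) up ts) = avoiding (Suc n) pats"
proof
  show "avoiding (Suc n) pats \<subseteq> set (zigzag (avoiding (Suc n) pats) (Suc n) up ts)"
  proof
    fix T assume T: "T \<in> avoiding (Suc n) pats"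
    then obtain t i where ti: "t \<in> Tn n" "i \<le> rb_length t" "T = ins_rb (Suc n) i t"
      using Tn_Suc_cases avoiding_subset_Tn by blast
    then have "t \<in> set ts" using ins_rb_in_avoidingD[OF assms(1)] T assms(2) by blast
    then show "T \<in> set (zigzag (avoiding (Suc n) pats) (Suc n) up ts)"
      using ti T by (auto simp: set_zigzag)
  qed
qed (auto simp: set_zigzag)

lemma zigzag_take_Suc:
  "k < length ts \<Longrightarrow>
   zigzag L n up (take (Suc k) ts) = zigzag L n up (take k ts) @ block L n (if even k then up else \<not> up) (ts ! k)"
  by (simp add: take_Suc_conv_app_nth zigzag_append)

lemma ins_rb_notin_zigzag_take:
  assumes "distinct ts" "k < length ts" "i \<le> rb_length (ts ! k)"
  shows "ins_rb n i (ts ! k) \<notin> set (zigzag L n up (take k ts))"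
proof
  assume "ins_rb n i (ts ! k) \<in> set (zigzag L n up (take k ts))"
  then obtain t i' where "t \<in> set (take k ts)" "i' \<le> rb_length t" "ins_rb n i' t = ins_rb n i (ts ! k)"
    by (auto simp: set_zigzag)
  then show False using ins_rb_inj[OF _ assms(3)] nth_notin_set_take[OF assms(1,2)] by metis
qed

context
  fixes pats :: "pattern list" and n' :: nat and xs' :: "nat tree list"
  assumes friendly: "\<forall>pe \<in> set pats. friendly pe"
    and steps: "S_steps (avoiding n' pats) xs'"
    and distinct: "distinct xs'"
    and visits: "set xs' = avoiding n' pats"
begin

lemma block_ends_avoiding:
  assumes "k < length xs'"
  shows "block (avoiding (Suc n') pats) (Suc n') up (xs' ! k) \<noteq> []"
    and "hd (block (avoiding (Suc n') pats) (Suc n') up (xs' ! k)) =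
      ins_rb (Suc n') (if up then rb_length (xs' ! k) else 0) (xs' ! k)"
    and "last (block (avoiding (Suc n') pats) (Suc n') up (xs' ! k)) =
      ins_rb (Suc n') (if up then 0 else rb_length (xs' ! k)) (xs' ! k)"
proof -
  have "xs' ! k \<in> avoiding n' pats" using assms visits nth_mem by blast
  then have "ins_rb (Suc n') 0 (xs' ! k) \<in> avoiding (Suc n') pats"
    "ins_rb (Suc n') (rb_length (xs' ! k)) (xs' ! k) \<in> avoiding (Suc n') pats"
    using ins_rb_end_in_avoiding_iff[OF friendly, of "xs' ! k" n' False]
      ins_rb_end_in_avoiding_iff[OF friendly, of "xs' ! k" n' True] avoiding_subset_Tn
    by auto
  then show "block (avoiding (Suc n') pats) (Suc n') up (xs' ! k) \<noteq> []"
    "hd (block (avoiding (Suc n') pats) (Suc n') up (xs' ! k)) =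
      ins_rb (Suc n') (if up then rb_length (xs' ! k) else 0) (xs' ! k)"
    "last (block (avoiding (Suc n') pats) (Suc n') up (xs' ! k)) =
      ins_rb (Suc n') (if up then 0 else rb_length (xs' ! k)) (xs' ! k)"
    by (rule block_ends)+
qed

lemma S_step_next_block:
  assumes k: "0 < k" "k < length xs'"
  shows "S_step (avoiding (Suc n') pats) (zigzag (avoiding (Suc n') pats) (Suc n') True (take k xs'))
    (hd (block (avoiding (Suc n') pats) (Suc n') (even k) (xs' ! k)))"
proof -
  let ?L = "avoiding (Suc n') pats" and ?L' = "avoiding n' pats"
  let ?E = "\<lambda>s. ins_rb (Suc n') (if even k then rb_length s else 0) s"
  let ?V = "zigzag ?L (Suc n') True (take k xs')"
  have "?V = zigzag ?L (Suc n') True (take (k - 1) xs') @ block ?L (Suc n') (even (k - 1)) (xs' ! (k - 1))"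
    using zigzag_take_Suc[of "k - 1" xs'] k by simp
  moreover have "even (k - 1) \<longleftrightarrow> \<not> even k" using k(1) by simp
  ultimately have "last ?V = ?E (xs' ! (k - 1))"
    using block_ends_avoiding[of "k - 1"] k by simp
  also have "xs' ! (k - 1) = last (take k xs')" by (subst last_conv_nth) (use k in auto)
  finally have last_V: "last ?V = ?E (last (take k xs'))" .
  have "lifted_visit n' ?L ?L' ?E (take k xs') ?V"
  proof (rule lifted_visit.intro[OF commuting_insertion_avoiding[OF friendly]], unfold_locales)
    show "take k xs' \<noteq> []" using k by (cases xs') auto
    show "set (take k xs') \<subseteq> ?L'" using visits set_take_subset by metis
  qed (rule set_zigzag, rule last_V)
  then interpret lifted_visit n' ?L ?L' ?E "take k xs'" ?V .
  have "S_step ?L' (take k xs') (xs' ! k)"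
    using spec[OF steps[unfolded S_steps_def], of "k - 1"] k by simp
  then have "S_step ?L ?V (?E (xs' ! k))" by (rule S_step_lift)
  then show ?thesis using block_ends_avoiding(2)[OF k(2)] by simp
qed

lemma S_steps_zigzag_take:
  "k \<le> length xs' \<Longrightarrow> S_steps (avoiding (Suc n') pats) (zigzag (avoiding (Suc n') pats) (Suc n') True (take k xs'))"
proof (induction k)
  case 0
  then show ?case by (simp add: S_steps_def)
next
  case (Suc k)
  let ?L = "avoiding (Suc n') pats"
  let ?V = "zigzag ?L (Suc n') True (take k xs')" and ?W = "block ?L (Suc n') (even k) (xs' ! k)"
  have k: "k < length xs'" using Suc.prems by simp
  have t: "xs' ! k \<in> Tn n'" using visits avoiding_subset_Tn nth_mem[OF k] by blast
  have V0: "\<forall>T \<in> set ?V. \<forall>i \<le> rb_length (xs' ! k). T \<noteq> ins_rb (Suc n') i (xs' ! k)"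
    using ins_rb_notin_zigzag_take[OF distinct k] by blast
  have below: "\<forall>v \<in> set_tree (xs' ! k). v < Suc n'" using set_tree_Tn[OF t] by auto
  have "S_steps ?L (?V @ ?W)"
  proof (rule S_steps_append)
    show "S_steps ?L ?V" using Suc by simp
    show "S_step ?L ?V (hd ?W)" if "?V \<noteq> []"
    proof -
      have "0 < k" using that by (cases k) auto
      then show ?thesis by (rule S_step_next_block[OF _ k])
    qed
    show "S_step ?L (?V @ take j ?W) (?W ! j)" if "0 < j" "j < length ?W" for j
      by (rule S_step_within_block[OF below V0 that])
  qed
  moreover have "zigzag ?L (Suc n') True (take (Suc k) xs') = ?V @ ?W"
    using zigzag_take_Suc[OF k, of ?L "Suc n'" True] by (cases "even k") simp_all
  ultimately show ?case by simp
qed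

end

fun right_path :: "nat list \<Rightarrow> nat tree" where
  "right_path [] = Leaf"
| "right_path (x # xs) = Node Leaf x (right_path xs)"

lemma right_path_snoc: "right_path (xs @ [a]) = ins_rb a (length xs) (right_path xs)"
  by (induction xs) auto

lemma rb_length_right_path: "rb_length (right_path xs) = length xs"
  by (induction xs) auto

lemma eq_right_path_if_no_left_child:
  "\<forall>i. cL t i = None \<Longrightarrow> distinct_tree t \<Longrightarrow> t = right_path (inorder t)"
proof (induction t)
  case (Node l x r)
  have "l = Leaf" using Node.prems(1) by (cases l) (auto simp: cL_Node dest: spec[of _ x])
  moreover have "cL r i = None" for i
  proof (cases "i \<in> set_tree r")
    case True
    then have "i \<noteq> x" using Node.prems(2) by auto
    then show ?thesis using spec[OF Node.prems(1), of i] True \<open>l = Leaf\<close> by (simp add: cL_Node)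
  qed (simp add: cL_def)
  ultimately show ?case using Node by simp
qed simp

lemma S_run_zigzag:
  assumes friendly: "\<forall>pe \<in> set pats. friendly pe"
    and run: "S_run (avoiding n' pats) (right_path [1..<Suc n']) xs'"
    and distinct: "distinct xs'" and visits: "set xs' = avoiding n' pats"
  shows "S_run (avoiding (Suc n') pats) (right_path [1..<Suc (Suc n')])
    (zigzag (avoiding (Suc n') pats) (Suc n') True xs')"
proof -
  let ?L = "avoiding (Suc n') pats"
  have steps: "S_steps (avoiding n' pats) xs'" and xs': "xs' \<noteq> []" "xs' ! 0 = right_path [1..<Suc n']"
    using run by (auto simp: S_run_iff hd_conv_nth)
  have "zigzag ?L (Suc n') True xs' = block ?L (Suc n') True (xs' ! 0) @ zigzag ?L (Suc n') False (tl xs')"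
    using xs'(1) by (cases xs') auto
  moreover note block_ends_avoiding[OF friendly steps distinct visits, of 0 True]
  ultimately have "zigzag ?L (Suc n') True xs' \<noteq> []"
    "hd (zigzag ?L (Suc n') True xs') = right_path [1..<Suc (Suc n')]"
    using xs' by (simp_all add: right_path_snoc rb_length_right_path)
  moreover have "S_steps ?L (zigzag ?L (Suc n') True xs')"
    using S_steps_zigzag_take[OF friendly steps distinct visits, of "length xs'"] by simp
  moreover have "S_stop ?L (zigzag ?L (Suc n') True xs')"
    by (rule S_stop_if_all_visited[OF set_zigzag_avoiding[OF friendly visits]])
  ultimately show ?thesis by (simp add: S_run_iff)
qed

lemma avoiding_0: "\<forall>pe \<in> set pats. friendly pe \<Longrightarrow> avoiding 0 pats = {Leaf}"
proof -
  assume friendly: "\<forall>pe \<in> set pats. friendly pe"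
  have "\<not> contains Leaf (P, e)" if "(P, e) \<in> set pats" for P e
  proof
    assume "contains Leaf (P, e)"
    then have "P = Leaf" by (cases P) (auto simp: contains_iff_embedding embedding_def)
    moreover have "friendly (P, e)" using friendly that by blast
    ultimately show False by (auto elim: friendlyE)
  qed
  then show ?thesis by (auto simp: avoiding_def Tn_def)
qed

lemma S_run_avoiding:
  assumes "\<forall>pe \<in> set pats. friendly pe"
  shows "\<exists>xs. S_run (avoiding n pats) (right_path [1..<Suc n]) xs \<and> distinct xs \<and> set xs = avoiding n pats"
proof (induction n)
  case 0
  have "S_run (avoiding 0 pats) (right_path [1..<Suc 0]) [Leaf]"
    using S_stop_if_all_visited[of "[Leaf]"] avoiding_0[OF assms] by (simp add: S_run_def)
  then show ?case using avoiding_0[OF assms] by fastforce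
next
  case (Suc n)
  then obtain xs where "S_run (avoiding n pats) (right_path [1..<Suc n]) xs" "distinct xs" "set xs = avoiding n pats"
    by blast
  then show ?case
    using S_run_zigzag[OF assms] distinct_zigzag set_zigzag_avoiding[OF assms] by blast
qed

theorem theorem3:
  fixes pats :: "pattern list" and n :: nat and T0 :: "nat tree"
  assumes "\<forall>pe \<in> set pats. friendly pe"
    and "T0 \<in> Tn n"
    and "\<forall>i. cL T0 i = None"
  shows "\<exists>xs. S_run (avoiding n pats) T0 xs \<and> distinct xs \<and> set xs = avoiding n pats"
proof -
  have "inorder T0 = [1..<Suc n]" using assms(2) unfolding Tn_def by (rule CollectD)
  then have "T0 = right_path [1..<Suc n]"
    using eq_right_path_if_no_left_child[OF assms(3)] distinct_upt by metis
  then show ?thesis using S_run_avoiding[OF assms(1)] by simp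
qed

end
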